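(* Let $\mathbb{A}$ be a 2-category having the two-dimensional cokernel diagram of a 1-cell $p:e\to b$. Then: (1) $p$ is monadic if and only if $p$ has a left adjoint and $p$ is an effective faithful morphism; (2) $p$ is comonadic if and only if $p$ has a right adjoint and $p$ is an effective faithful morphism.
   Context: A 2-category is a $\mathbf{Cat}$-enriched category; composition of 1-cells is juxtaposition, vertical composition of 2-cells is $\cdot$, horizontal composition is $\ast$, $\mathrm{id}_f$ is the identity 2-cell on $f$. $\mathbb{A}^{\mathrm{co}}$ is obtained by reversing 2-cells. A 1-cell is an equivalence if it has a pseudo-inverse up to invertible 2-cells. Adjunctions in $\mathbb{A}$ are given by unit and counit 2-cells satisfying the triangle identities. Opcomma object of $p$ along itself: $b\uparrow_p b$ with $\delta^0,\delta^1:b\to b\uparrow_pb$ and $\alpha:\delta^1p\Rightarrow\delta^0p$ such that for every $y$, $h\mapsto(h\delta^0,h\delta^1,\mathrm{id}_h\ast\alpha)$, $\xi\mapsto(\xi\ast\mathrm{id}_{\delta^0},\xi\ast\mathrm{id}_{\delta^1})$ is an isomorphism from $\mathbb{A}(b\uparrow_pb,y)$ onto the category of triples $(h_0,h_1:b\to y,\beta:h_1p\Rightarrow h_0p)$ with morphisms pairs $(\xi_0,\xi_1)$ with $(\xi_0\ast\mathrm{id}_p)\cdot\beta=\beta'\cdot(\xi_1\ast\mathrm{id}_p)$. A two-dimensional pushout of a span $f_0:c\to c_0$, $f_1:c\to c_1$ is $P$ with $q_0,q_1$, $q_0f_0=q_1f_1$, such that $k\mapsto(kq_0,kq_1)$ is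 an isomorphism from $\mathbb{A}(P,y)$ onto the category of pairs $(k_0,k_1)$ with $k_0f_0=k_1f_1$ and morphisms pairs of 2-cells $(\xi_0,\xi_1)$ with $\xi_0\ast\mathrm{id}_{f_0}=\xi_1\ast\mathrm{id}_{f_1}$. $\mathbb{A}$ has the two-dimensional cokernel diagram of $p$ if it has $b\uparrow_pb$ and a two-dimensional pushout $b\uparrow_pb\uparrow_pb$ of $(\delta^0,\delta^1)$ with $D^0,D^2$, $D^2\delta^0=D^0\delta^1$; $D^1$ is the unique 1-cell with $D^1\delta^1=D^2\delta^1$, $D^1\delta^0=D^0\delta^0$, $\mathrm{id}_{D^1}\ast\alpha=(\mathrm{id}_{D^0}\ast\alpha)\cdot(\mathrm{id}_{D^2}\ast\alpha)$; $s^0$ is the unique 1-cell with $s^0\delta^0=s^0\delta^1=\mathrm{id}_b$, $\mathrm{id}_{s^0}\ast\alpha=\mathrm{id}_p$. Effective faithful: $\mathrm{Desc}_p(y)$ has objects $(h:y\to b,\beta:\delta^1h\Rightarrow\delta^0h)$ with $(\mathrm{id}_{D^0}\ast\beta)\cdot(\mathrm{id}_{D^2}\ast\beta)=\mathrm{id}_{D^1}\ast\beta$, $\mathrm{id}_{s^0}\ast\beta=\mathrm{id}_h$, morphisms 2-cells $\xi:h_1\Rightarrow h_0$ with $\beta_0\cdot(\mathrm{id}_{\delta^1}\ast\xi)=(\mathrm{id}_{\delta^0}\ast\xi)\cdot\beta_1$; a lax descent object is $L$ with $d:L\to b$, $\Psi:\delta^1d\Rightarrow\delta^0d$ such that $g\mapsto(dg,\Psi\ast\mathrm{id}_g)$,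 $\xi\mapsto\mathrm{id}_d\ast\xi$ is an isomorphism $\mathbb{A}(y,L)\cong\mathrm{Desc}_p(y)$ for all $y$; $p^H$ is unique with $dp^H=p$, $\Psi\ast\mathrm{id}_{p^H}=\alpha$. $p$ is an effective faithful morphism if $\mathbb{A}$ has the two-dimensional cokernel diagram of $p$, a lax descent object of it, and $p^H$ is an equivalence. Monadic: a right Kan extension of $f$ along $g$ is $(r,\gamma:rg\Rightarrow f)$ with $\beta\mapsto\gamma\cdot(\beta\ast\mathrm{id}_g)$ bijective from 2-cells $k\Rightarrow r$ to 2-cells $kg\Rightarrow f$. The codensity monad of $p$ is $(b,t,m,\eta)$ where $(t,\gamma)$ is a right Kan extension of $p$ along $p$, $m$ unique with $\gamma\cdot(m\ast\mathrm{id}_p)=\gamma\cdot(\mathrm{id}_t\ast\gamma)$, $\eta$ unique with $\gamma\cdot(\eta\ast\mathrm{id}_p)=\mathrm{id}_p$. An Eilenberg–Moore object of $\mathsf{T}=(b,t,m,\eta)$ is $b^{\mathsf{T}}$ with $u:b^{\mathsf{T}}\to b$, $\mu:tu\Rightarrow u$ such that $g\mapsto(ug,\mu\ast\mathrm{id}_g)$ is an isomorphism from $\mathbb{A}(y,b^{\mathsf{T}})$ onto the category of pairs $(h,\beta:th\Rightarrow h)$ with $\beta\cdot(\mathrm{id}_t\ast\beta)=\beta\cdot(m\ast\mathrm{id}_h)$, $\beta\cdot(\eta\ast\mathrm{id}_h)=\mathrm{id}_h$ (morphisms $\xi$ with $\xi\cdot\beta_1=\beta_0\cdot(\mathrm{id}_t\ast\xi)$).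 $p$ is monadic if it has a codensity monad $\mathsf{T}$, $\mathbb{A}$ has an Eilenberg–Moore object of $\mathsf{T}$, and the unique $p^{\mathsf{T}}$ with $up^{\mathsf{T}}=p$, $\mu\ast\mathrm{id}_{p^{\mathsf{T}}}=\gamma$ is an equivalence. $p$ is comonadic if the corresponding 1-cell of $\mathbb{A}^{\mathrm{co}}$ is monadic in $\mathbb{A}^{\mathrm{co}}$. *)

theory Defs
  imports Main
begin

text \<open>Objects of type 'o, 1-cells of type 'a, 2-cells of type 'c.
  cmp g f is the juxtaposition g f (first f, then g);
  vc b a is the vertical composite b . a (first a, then b);
  hc b a is the horizontal composite b * a (b on the left).\<close>

record ('o, 'a, 'c) twocat_data =
  Ob   :: "'o set"
  Ar   :: "'a set"
  Ce   :: "'c set"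
  src1 :: "'a \<Rightarrow> 'o"
  trg1 :: "'a \<Rightarrow> 'o"
  dom2 :: "'c \<Rightarrow> 'a"
  cod2 :: "'c \<Rightarrow> 'a"
  cmp  :: "'a \<Rightarrow> 'a \<Rightarrow> 'a"
  ide1 :: "'o \<Rightarrow> 'a"
  vc   :: "'c \<Rightarrow> 'c \<Rightarrow> 'c"
  hc   :: "'c \<Rightarrow> 'c \<Rightarrow> 'c"
  id2  :: "'a \<Rightarrow> 'c"

definition hom1 :: "('o,'a,'c,'z) twocat_data_scheme \<Rightarrow> 'o \<Rightarrow> 'o \<Rightarrow> 'a set" where
  "hom1 C x y = {f \<in> Ar C. src1 C f = x \<and> trg1 C f = y}"

definition hom2 :: "('o,'a,'c,'z) twocat_data_scheme \<Rightarrow> 'a \<Rightarrow> 'a \<Rightarrow> 'c set" where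
  "hom2 C f g = {\<xi> \<in> Ce C. dom2 C \<xi> = f \<and> cod2 C \<xi> = g}"

definition twocat :: "('o,'a,'c,'z) twocat_data_scheme \<Rightarrow> bool" where
  "twocat C \<longleftrightarrow>
    (\<forall>x\<in>Ob C. ide1 C x \<in> hom1 C x x) \<and>
    (\<forall>f\<in>Ar C. src1 C f \<in> Ob C \<and> trg1 C f \<in> Ob C) \<and>
    (\<forall>x\<in>Ob C. \<forall>y\<in>Ob C. \<forall>z\<in>Ob C. \<forall>f\<in>hom1 C x y. \<forall>g\<in>hom1 C y z.
        cmp C g f \<in> hom1 C x z) \<and>
    (\<forall>x\<in>Ob C. \<forall>y\<in>Ob C. \<forall>z\<in>Ob C. \<forall>w\<in>Ob C.
       \<forall>f\<in>hom1 C x y. \<forall>g\<in>hom1 C y z. \<forall>h\<in>hom1 C z w.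
        cmp C h (cmp C g f) = cmp C (cmp C h g) f) \<and>
    (\<forall>f\<in>Ar C. cmp C (ide1 C (trg1 C f)) f = f \<and> cmp C f (ide1 C (src1 C f)) = f) \<and>
    (\<forall>\<xi>\<in>Ce C. dom2 C \<xi> \<in> Ar C \<and> cod2 C \<xi> \<in> Ar C \<and>
        src1 C (dom2 C \<xi>) = src1 C (cod2 C \<xi>) \<and> trg1 C (dom2 C \<xi>) = trg1 C (cod2 C \<xi>)) \<and>
    (\<forall>f\<in>Ar C. id2 C f \<in> hom2 C f f) \<and>
    (\<forall>f g h \<xi> \<eta>. \<xi> \<in> hom2 C f g \<longrightarrow> \<eta> \<in> hom2 C g h \<longrightarrow> vc C \<eta> \<xi> \<in> hom2 C f h) \<and>
    (\<forall>f g h k \<xi> \<eta> \<theta>. \<xi> \<in> hom2 C f g \<longrightarrow> \<eta> \<in> hom2 C g h \<longrightarrow> \<theta> \<in> hom2 C h k \<longrightarrow>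
        vc C \<theta> (vc C \<eta> \<xi>) = vc C (vc C \<theta> \<eta>) \<xi>) \<and>
    (\<forall>\<xi>\<in>Ce C. vc C (id2 C (cod2 C \<xi>)) \<xi> = \<xi> \<and> vc C \<xi> (id2 C (dom2 C \<xi>)) = \<xi>) \<and>
    (\<forall>x\<in>Ob C. \<forall>y\<in>Ob C. \<forall>z\<in>Ob C. \<forall>f\<in>hom1 C x y. \<forall>f'\<in>hom1 C x y.
       \<forall>g\<in>hom1 C y z. \<forall>g'\<in>hom1 C y z. \<forall>\<xi>\<in>hom2 C f f'. \<forall>\<eta>\<in>hom2 C g g'.
        hc C \<eta> \<xi> \<in> hom2 C (cmp C g f) (cmp C g' f')) \<and>
    (\<forall>\<xi>\<in>Ce C. \<forall>\<eta>\<in>Ce C. \<forall>\<theta>\<in>Ce C.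
        src1 C (dom2 C \<eta>) = trg1 C (dom2 C \<xi>) \<longrightarrow> src1 C (dom2 C \<theta>) = trg1 C (dom2 C \<eta>) \<longrightarrow>
        hc C \<theta> (hc C \<eta> \<xi>) = hc C (hc C \<theta> \<eta>) \<xi>) \<and>
    (\<forall>\<xi>\<in>Ce C. hc C (id2 C (ide1 C (trg1 C (dom2 C \<xi>)))) \<xi> = \<xi> \<and>
        hc C \<xi> (id2 C (ide1 C (src1 C (dom2 C \<xi>)))) = \<xi>) \<and>
    (\<forall>f\<in>Ar C. \<forall>g\<in>Ar C. src1 C g = trg1 C f \<longrightarrow>
        id2 C (cmp C g f) = hc C (id2 C g) (id2 C f)) \<and>
    (\<forall>x\<in>Ob C. \<forall>y\<in>Ob C. \<forall>z\<in>Ob C. \<forall>f\<in>hom1 C x y. \<forall>f'\<in>hom1 C x y. \<forall>f''\<in>hom1 C x y.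
       \<forall>g\<in>hom1 C y z. \<forall>g'\<in>hom1 C y z. \<forall>g''\<in>hom1 C y z.
       \<forall>\<xi>\<in>hom2 C f f'. \<forall>\<xi>'\<in>hom2 C f' f''. \<forall>\<eta>\<in>hom2 C g g'. \<forall>\<eta>'\<in>hom2 C g' g''.
        hc C (vc C \<eta>' \<eta>) (vc C \<xi>' \<xi>) = vc C (hc C \<eta>' \<xi>') (hc C \<eta> \<xi>))"

definition co :: "('o,'a,'c,'z) twocat_data_scheme \<Rightarrow> ('o,'a,'c,'z) twocat_data_scheme" where
  "co C = C\<lparr>dom2 := cod2 C, cod2 := dom2 C, vc := (\<lambda>a b. vc C b a)\<rparr>"

text \<open>A functor given by object map F and morphism map G between categories with object
  sets X, Y and hom-sets HX, HY is an isomorphism iff it is bijective on objects and on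
  every hom-set. (All the comparison maps below are functorial by the 2-category axioms.)\<close>
definition cat_iso_by ::
  "'x set \<Rightarrow> ('x \<Rightarrow> 'x \<Rightarrow> 'm set) \<Rightarrow> 'y set \<Rightarrow> ('y \<Rightarrow> 'y \<Rightarrow> 'n set)
     \<Rightarrow> ('x \<Rightarrow> 'y) \<Rightarrow> ('m \<Rightarrow> 'n) \<Rightarrow> bool" where
  "cat_iso_by X HX Y HY F G \<longleftrightarrow>
     bij_betw F X Y \<and> (\<forall>a\<in>X. \<forall>b\<in>X. bij_betw G (HX a b) (HY (F a) (F b)))"

definition invertible2 :: "('o,'a,'c,'z) twocat_data_scheme \<Rightarrow> 'c \<Rightarrow> bool" where
  "invertible2 C \<xi> \<longleftrightarrow> \<xi> \<in> Ce C \<and>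
     (\<exists>\<theta>\<in>hom2 C (cod2 C \<xi>) (dom2 C \<xi>).
        vc C \<theta> \<xi> = id2 C (dom2 C \<xi>) \<and> vc C \<xi> \<theta> = id2 C (cod2 C \<xi>))"

definition equivalence1 :: "('o,'a,'c,'z) twocat_data_scheme \<Rightarrow> 'a \<Rightarrow> bool" where
  "equivalence1 C f \<longleftrightarrow> f \<in> Ar C \<and>
     (\<exists>g\<in>hom1 C (trg1 C f) (src1 C f).
        \<exists>\<eta>\<in>hom2 C (ide1 C (src1 C f)) (cmp C g f). \<exists>\<epsilon>\<in>hom2 C (cmp C f g) (ide1 C (trg1 C f)).
          invertible2 C \<eta> \<and> invertible2 C \<epsilon>)"

text \<open>adjunction C l r eta eps : l is left adjoint to r.\<close>
definition adjunction :: "('o,'a,'c,'z) twocat_data_scheme \<Rightarrow> 'a \<Rightarrow> 'a \<Rightarrow> 'c \<Rightarrow> 'c \<Rightarrow> bool" where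
  "adjunction C l r \<eta> \<epsilon> \<longleftrightarrow>
     l \<in> Ar C \<and> r \<in> hom1 C (trg1 C l) (src1 C l) \<and>
     \<eta> \<in> hom2 C (ide1 C (src1 C l)) (cmp C r l) \<and>
     \<epsilon> \<in> hom2 C (cmp C l r) (ide1 C (trg1 C l)) \<and>
     vc C (hc C \<epsilon> (id2 C l)) (hc C (id2 C l) \<eta>) = id2 C l \<and>
     vc C (hc C (id2 C r) \<epsilon>) (hc C \<eta> (id2 C r)) = id2 C r"

definition has_left_adjoint :: "('o,'a,'c,'z) twocat_data_scheme \<Rightarrow> 'a \<Rightarrow> bool" where
  "has_left_adjoint C p \<longleftrightarrow> (\<exists>l \<eta> \<epsilon>. adjunction C l p \<eta> \<epsilon>)"

definition has_right_adjoint :: "('o,'a,'c,'z) twocat_data_scheme \<Rightarrow> 'a \<Rightarrow> bool" where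
  "has_right_adjoint C p \<longleftrightarrow> (\<exists>r \<eta> \<epsilon>. adjunction C p r \<eta> \<epsilon>)"

definition opcomma ::
  "('o,'a,'c,'z) twocat_data_scheme \<Rightarrow> 'a \<Rightarrow> 'o \<Rightarrow> 'a \<Rightarrow> 'a \<Rightarrow> 'c \<Rightarrow> bool" where
  "opcomma C p P d0 d1 \<alpha> \<longleftrightarrow>
     p \<in> Ar C \<and> P \<in> Ob C \<and> d0 \<in> hom1 C (trg1 C p) P \<and> d1 \<in> hom1 C (trg1 C p) P \<and>
     \<alpha> \<in> hom2 C (cmp C d1 p) (cmp C d0 p) \<and>
     (\<forall>y\<in>Ob C.
        cat_iso_by (hom1 C P y) (hom2 C)
          {(h0, h1, \<beta>). h0 \<in> hom1 C (trg1 C p) y \<and> h1 \<in> hom1 C (trg1 C p) y \<and>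
                        \<beta> \<in> hom2 C (cmp C h1 p) (cmp C h0 p)}
          (\<lambda>(h0, h1, \<beta>) (h0', h1', \<beta>').
             {(\<xi>0, \<xi>1). \<xi>0 \<in> hom2 C h0 h0' \<and> \<xi>1 \<in> hom2 C h1 h1' \<and>
                vc C (hc C \<xi>0 (id2 C p)) \<beta> = vc C \<beta>' (hc C \<xi>1 (id2 C p))})
          (\<lambda>h. (cmp C h d0, cmp C h d1, hc C (id2 C h) \<alpha>))
          (\<lambda>\<xi>. (hc C \<xi> (id2 C d0), hc C \<xi> (id2 C d1))))"

definition pushout2 ::
  "('o,'a,'c,'z) twocat_data_scheme \<Rightarrow> 'a \<Rightarrow> 'a \<Rightarrow> 'o \<Rightarrow> 'a \<Rightarrow> 'a \<Rightarrow> bool" where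
  "pushout2 C f0 f1 P q0 q1 \<longleftrightarrow>
     f0 \<in> Ar C \<and> f1 \<in> Ar C \<and> src1 C f0 = src1 C f1 \<and> P \<in> Ob C \<and>
     q0 \<in> hom1 C (trg1 C f0) P \<and> q1 \<in> hom1 C (trg1 C f1) P \<and> cmp C q0 f0 = cmp C q1 f1 \<and>
     (\<forall>y\<in>Ob C.
        cat_iso_by (hom1 C P y) (hom2 C)
          {(k0, k1). k0 \<in> hom1 C (trg1 C f0) y \<and> k1 \<in> hom1 C (trg1 C f1) y \<and>
                     cmp C k0 f0 = cmp C k1 f1}
          (\<lambda>(k0, k1) (k0', k1').
             {(\<xi>0, \<xi>1). \<xi>0 \<in> hom2 C k0 k0' \<and> \<xi>1 \<in> hom2 C k1 k1' \<and>
                hc C \<xi>0 (id2 C f0) = hc C \<xi>1 (id2 C f1)})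
          (\<lambda>k. (cmp C k q0, cmp C k q1))
          (\<lambda>\<xi>. (hc C \<xi> (id2 C q0), hc C \<xi> (id2 C q1))))"

text \<open>The two-dimensional cokernel diagram of p: opcomma object P with d0, d1, alpha;
  two-dimensional pushout Q of (d0, d1) with D0, D2 (D2 d0 = D0 d1); and the induced
  1-cells D1 : P -> Q and s0 : P -> b (uniquely determined by the stated equations).\<close>
definition cokernel_diagram ::
  "('o,'a,'c,'z) twocat_data_scheme \<Rightarrow> 'a \<Rightarrow> 'o \<Rightarrow> 'a \<Rightarrow> 'a \<Rightarrow> 'c \<Rightarrow>
     'o \<Rightarrow> 'a \<Rightarrow> 'a \<Rightarrow> 'a \<Rightarrow> 'a \<Rightarrow> bool" where
  "cokernel_diagram C p P d0 d1 \<alpha> Q D0 D1 D2 s0 \<longleftrightarrow>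
     opcomma C p P d0 d1 \<alpha> \<and>
     pushout2 C d0 d1 Q D2 D0 \<and>
     D1 \<in> hom1 C P Q \<and> cmp C D1 d1 = cmp C D2 d1 \<and> cmp C D1 d0 = cmp C D0 d0 \<and>
     hc C (id2 C D1) \<alpha> = vc C (hc C (id2 C D0) \<alpha>) (hc C (id2 C D2) \<alpha>) \<and>
     s0 \<in> hom1 C P (trg1 C p) \<and> cmp C s0 d0 = ide1 C (trg1 C p) \<and>
     cmp C s0 d1 = ide1 C (trg1 C p) \<and> hc C (id2 C s0) \<alpha> = id2 C p"

definition has_cokernel_diagram :: "('o,'a,'c,'z) twocat_data_scheme \<Rightarrow> 'a \<Rightarrow> bool" where
  "has_cokernel_diagram C p \<longleftrightarrow>
     (\<exists>P d0 d1 \<alpha> Q D0 D1 D2 s0. cokernel_diagram C p P d0 d1 \<alpha> Q D0 D1 D2 s0)"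

definition lax_descent_object ::
  "('o,'a,'c,'z) twocat_data_scheme \<Rightarrow> 'a \<Rightarrow> 'a \<Rightarrow> 'a \<Rightarrow> 'a \<Rightarrow> 'a \<Rightarrow> 'a \<Rightarrow> 'a \<Rightarrow>
     'o \<Rightarrow> 'a \<Rightarrow> 'c \<Rightarrow> bool" where
  "lax_descent_object C p d0 d1 D0 D1 D2 s0 L d \<Psi> \<longleftrightarrow>
     L \<in> Ob C \<and> d \<in> hom1 C L (trg1 C p) \<and> \<Psi> \<in> hom2 C (cmp C d1 d) (cmp C d0 d) \<and>
     (\<forall>y\<in>Ob C.
        cat_iso_by (hom1 C y L) (hom2 C)
          {(h, \<beta>). h \<in> hom1 C y (trg1 C p) \<and> \<beta> \<in> hom2 C (cmp C d1 h) (cmp C d0 h) \<and>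
                   vc C (hc C (id2 C D0) \<beta>) (hc C (id2 C D2) \<beta>) = hc C (id2 C D1) \<beta> \<and>
                   hc C (id2 C s0) \<beta> = id2 C h}
          (\<lambda>(h, \<beta>) (h', \<beta>').
             {\<xi>. \<xi> \<in> hom2 C h h' \<and>
                 vc C \<beta>' (hc C (id2 C d1) \<xi>) = vc C (hc C (id2 C d0) \<xi>) \<beta>})
          (\<lambda>g. (cmp C d g, hc C \<Psi> (id2 C g)))
          (\<lambda>\<xi>. hc C (id2 C d) \<xi>))"

definition effective_faithful :: "('o,'a,'c,'z) twocat_data_scheme \<Rightarrow> 'a \<Rightarrow> bool" where
  "effective_faithful C p \<longleftrightarrow>
     (\<exists>P d0 d1 \<alpha> Q D0 D1 D2 s0 L d \<Psi> pH.
        cokernel_diagram C p P d0 d1 \<alpha> Q D0 D1 D2 s0 \<and>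
        lax_descent_object C p d0 d1 D0 D1 D2 s0 L d \<Psi> \<and>
        pH \<in> hom1 C (src1 C p) L \<and> cmp C d pH = p \<and> hc C \<Psi> (id2 C pH) = \<alpha> \<and>
        equivalence1 C pH)"

definition right_kan ::
  "('o,'a,'c,'z) twocat_data_scheme \<Rightarrow> 'a \<Rightarrow> 'a \<Rightarrow> 'a \<Rightarrow> 'c \<Rightarrow> bool" where
  "right_kan C f g r \<gamma> \<longleftrightarrow>
     f \<in> Ar C \<and> g \<in> Ar C \<and> src1 C f = src1 C g \<and>
     r \<in> hom1 C (trg1 C g) (trg1 C f) \<and> \<gamma> \<in> hom2 C (cmp C r g) f \<and>
     (\<forall>k\<in>hom1 C (trg1 C g) (trg1 C f).
        bij_betw (\<lambda>\<beta>. vc C \<gamma> (hc C \<beta> (id2 C g))) (hom2 C k r) (hom2 C (cmp C k g) f))"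

definition codensity_monad ::
  "('o,'a,'c,'z) twocat_data_scheme \<Rightarrow> 'a \<Rightarrow> 'a \<Rightarrow> 'c \<Rightarrow> 'c \<Rightarrow> 'c \<Rightarrow> bool" where
  "codensity_monad C p t \<gamma> m \<eta> \<longleftrightarrow>
     right_kan C p p t \<gamma> \<and>
     m \<in> hom2 C (cmp C t t) t \<and>
     vc C \<gamma> (hc C m (id2 C p)) = vc C \<gamma> (hc C (id2 C t) \<gamma>) \<and>
     \<eta> \<in> hom2 C (ide1 C (trg1 C p)) t \<and>
     vc C \<gamma> (hc C \<eta> (id2 C p)) = id2 C p"

definition eilenberg_moore ::
  "('o,'a,'c,'z) twocat_data_scheme \<Rightarrow> 'o \<Rightarrow> 'a \<Rightarrow> 'c \<Rightarrow> 'c \<Rightarrow> 'o \<Rightarrow> 'a \<Rightarrow> 'c \<Rightarrow> bool" where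
  "eilenberg_moore C b t m \<eta> bT u \<mu> \<longleftrightarrow>
     bT \<in> Ob C \<and> u \<in> hom1 C bT b \<and> \<mu> \<in> hom2 C (cmp C t u) u \<and>
     (\<forall>y\<in>Ob C.
        cat_iso_by (hom1 C y bT) (hom2 C)
          {(h, \<beta>). h \<in> hom1 C y b \<and> \<beta> \<in> hom2 C (cmp C t h) h \<and>
                   vc C \<beta> (hc C (id2 C t) \<beta>) = vc C \<beta> (hc C m (id2 C h)) \<and>
                   vc C \<beta> (hc C \<eta> (id2 C h)) = id2 C h}
          (\<lambda>(h, \<beta>) (h', \<beta>').
             {\<xi>. \<xi> \<in> hom2 C h h' \<and> vc C \<xi> \<beta> = vc C \<beta>' (hc C (id2 C t) \<xi>)})
          (\<lambda>g. (cmp C u g, hc C \<mu> (id2 C g)))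
          (\<lambda>\<xi>. hc C (id2 C u) \<xi>))"

definition monadic :: "('o,'a,'c,'z) twocat_data_scheme \<Rightarrow> 'a \<Rightarrow> bool" where
  "monadic C p \<longleftrightarrow> p \<in> Ar C \<and>
     (\<exists>t \<gamma> m \<eta> bT u \<mu> pT.
        codensity_monad C p t \<gamma> m \<eta> \<and>
        eilenberg_moore C (trg1 C p) t m \<eta> bT u \<mu> \<and>
        pT \<in> hom1 C (src1 C p) bT \<and> cmp C u pT = p \<and> hc C \<mu> (id2 C pT) = \<gamma> \<and>
        equivalence1 C pT)"

definition comonadic :: "('o,'a,'c,'z) twocat_data_scheme \<Rightarrow> 'a \<Rightarrow> bool" where
  "comonadic C p \<longleftrightarrow> monadic (co C) p"

end

(* When p : e -> b has a left adjoint l, the codensity monad of p is t = p l, and whiskering with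
   the 1-cell kappa : b/p/b -> b out of the opcomma object that classifies (1, t, gamma) identifies
   descent data for the cokernel diagram of p with t-algebras, naturally in the domain. Hence a lax
   descent object of the cokernel diagram and an Eilenberg-Moore object of t are the same thing, and
   the comparison 1-cells p^H and p^T coincide. A monadic p always has a left adjoint: the free
   algebra 1-cell, left adjoint to the forgetful u, composed with an adjoint inverse of the
   equivalence p^T. The comonadic statement is the monadic one in A^co, whose cokernel diagram is
   that of A with the roles of d0, d1 (and of D0, D2) exchanged. *)

theory Submission
  imports Defs
begin

section \<open>Whiskering in a strict 2-category\<close>

locale two_category =
  fixes C :: "('o,'a,'c,'z) twocat_data_scheme" (structure)
  assumes twocat: "twocat C"
begin

abbreviation comp1 (infixr "\<odot>" 55) where "g \<odot> f \<equiv> cmp C g f"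
abbreviation vcomp (infixr "\<bullet>" 55) where "\<eta> \<bullet> \<xi> \<equiv> vc C \<eta> \<xi>"
abbreviation hcomp (infixr "\<star>" 56) where "\<eta> \<star> \<xi> \<equiv> hc C \<eta> \<xi>"
abbreviation I where "I f \<equiv> id2 C f"
abbreviation id1 where "id1 x \<equiv> ide1 C x"
abbreviation "sr f \<equiv> src1 C f"
abbreviation "tg f \<equiv> trg1 C f"
abbreviation "dm \<xi> \<equiv> dom2 C \<xi>"
abbreviation "cd \<xi> \<equiv> cod2 C \<xi>"
abbreviation "Obs \<equiv> Ob C"
abbreviation "Arr \<equiv> Ar C"
abbreviation "Cel \<equiv> Ce C"

lemma hom1_iff[simp]: "f \<in> hom1 C x y \<longleftrightarrow> f \<in> Arr \<and> sr f = x \<and> tg f = y"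
  by (simp add: hom1_def)

lemma hom2_iff[simp]: "\<xi> \<in> hom2 C f g \<longleftrightarrow> \<xi> \<in> Cel \<and> dm \<xi> = f \<and> cd \<xi> = g"
  by (simp add: hom2_def)

lemma arr_src_trg[simp]: "f \<in> Arr \<Longrightarrow> sr f \<in> Obs" "f \<in> Arr \<Longrightarrow> tg f \<in> Obs"
  using twocat unfolding twocat_def by auto

lemma id1_arr[simp]: "x \<in> Obs \<Longrightarrow> id1 x \<in> Arr" "x \<in> Obs \<Longrightarrow> sr (id1 x) = x" "x \<in> Obs \<Longrightarrow> tg (id1 x) = x"
  using twocat unfolding twocat_def by auto

lemma comp_arr[simp]:
  assumes "f \<in> Arr" "g \<in> Arr" "sr g = tg f"
  shows "g \<odot> f \<in> Arr" "sr (g \<odot> f) = sr f" "tg (g \<odot> f) = tg g"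
proof -
  have "\<forall>x\<in>Obs. \<forall>y\<in>Obs. \<forall>z\<in>Obs. \<forall>f\<in>hom1 C x y. \<forall>g\<in>hom1 C y z. g \<odot> f \<in> hom1 C x z"
    using twocat unfolding twocat_def by (elim conjE)
  from this[rule_format, of "sr f" "tg f" "tg g" f g]
  have "g \<odot> f \<in> hom1 C (sr f) (tg g)"
    using assms by simp
  then show "g \<odot> f \<in> Arr" "sr (g \<odot> f) = sr f" "tg (g \<odot> f) = tg g" by auto
qed

lemma comp_assoc[simp]:
  assumes "f \<in> Arr" "g \<in> Arr" "h \<in> Arr" "sr g = tg f" "sr h = tg g"
  shows "(h \<odot> g) \<odot> f = h \<odot> (g \<odot> f)"
proof -
  have "\<forall>x\<in>Obs. \<forall>y\<in>Obs. \<forall>z\<in>Obs. \<forall>w\<in>Obs. \<forall>f\<in>hom1 C x y. \<forall>g\<in>hom1 C y z. \<forall>h\<in>hom1 C z w.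
          h \<odot> (g \<odot> f) = (h \<odot> g) \<odot> f"
    using twocat unfolding twocat_def by (elim conjE)
  from this[rule_format, of "sr f" "tg f" "tg g" "tg h" f g h] show ?thesis
    using assms by simp
qed

lemma comp_id1[simp]: "f \<in> Arr \<Longrightarrow> tg f = x \<Longrightarrow> id1 x \<odot> f = f" "f \<in> Arr \<Longrightarrow> sr f = x \<Longrightarrow> f \<odot> id1 x = f"
proof -
  have "\<forall>f\<in>Arr. id1 (tg f) \<odot> f = f \<and> f \<odot> id1 (sr f) = f"
    using twocat unfolding twocat_def by (elim conjE)
  then show "f \<in> Arr \<Longrightarrow> tg f = x \<Longrightarrow> id1 x \<odot> f = f" "f \<in> Arr \<Longrightarrow> sr f = x \<Longrightarrow> f \<odot> id1 x = f"
    by auto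
qed

lemma cell_dom_cod[simp]:
  "\<xi> \<in> Cel \<Longrightarrow> dm \<xi> \<in> Arr" "\<xi> \<in> Cel \<Longrightarrow> cd \<xi> \<in> Arr"
  "\<xi> \<in> Cel \<Longrightarrow> sr (cd \<xi>) = sr (dm \<xi>)" "\<xi> \<in> Cel \<Longrightarrow> tg (cd \<xi>) = tg (dm \<xi>)"
  using twocat unfolding twocat_def by auto

lemma id2_cell[simp]: "f \<in> Arr \<Longrightarrow> I f \<in> Cel" "f \<in> Arr \<Longrightarrow> dm (I f) = f" "f \<in> Arr \<Longrightarrow> cd (I f) = f"
  using twocat unfolding twocat_def by auto

lemma vcomp_cell[simp]:
  assumes "\<xi> \<in> Cel" "\<eta> \<in> Cel" "cd \<xi> = dm \<eta>"
  shows "\<eta> \<bullet> \<xi> \<in> Cel" "dm (\<eta> \<bullet> \<xi>) = dm \<xi>" "cd (\<eta> \<bullet> \<xi>) = cd \<eta>"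
proof -
  have "\<forall>f g h \<xi> \<eta>. \<xi> \<in> hom2 C f g \<longrightarrow> \<eta> \<in> hom2 C g h \<longrightarrow> \<eta> \<bullet> \<xi> \<in> hom2 C f h"
    using twocat unfolding twocat_def by (elim conjE)
  then have "\<eta> \<bullet> \<xi> \<in> hom2 C (dm \<xi>) (cd \<eta>)" using assms by simp
  then show "\<eta> \<bullet> \<xi> \<in> Cel" "dm (\<eta> \<bullet> \<xi>) = dm \<xi>" "cd (\<eta> \<bullet> \<xi>) = cd \<eta>" by auto
qed

lemma vcomp_assoc[simp]:
  assumes "\<xi> \<in> Cel" "\<eta> \<in> Cel" "\<theta> \<in> Cel" "cd \<xi> = dm \<eta>" "cd \<eta> = dm \<theta>"
  shows "(\<theta> \<bullet> \<eta>) \<bullet> \<xi> = \<theta> \<bullet> (\<eta> \<bullet> \<xi>)"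
proof -
  have "\<forall>f g h k \<xi> \<eta> \<theta>. \<xi> \<in> hom2 C f g \<longrightarrow> \<eta> \<in> hom2 C g h \<longrightarrow> \<theta> \<in> hom2 C h k \<longrightarrow>
          \<theta> \<bullet> (\<eta> \<bullet> \<xi>) = (\<theta> \<bullet> \<eta>) \<bullet> \<xi>"
    using twocat unfolding twocat_def by (elim conjE)
  then show ?thesis using assms by simp
qed

lemma vcomp_id2[simp]: "\<xi> \<in> Cel \<Longrightarrow> cd \<xi> = f \<Longrightarrow> I f \<bullet> \<xi> = \<xi>" "\<xi> \<in> Cel \<Longrightarrow> dm \<xi> = f \<Longrightarrow> \<xi> \<bullet> I f = \<xi>"
proof -
  have "\<forall>\<xi>\<in>Cel. I (cd \<xi>) \<bullet> \<xi> = \<xi> \<and> \<xi> \<bullet> I (dm \<xi>) = \<xi>"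
    using twocat unfolding twocat_def by (elim conjE)
  then show "\<xi> \<in> Cel \<Longrightarrow> cd \<xi> = f \<Longrightarrow> I f \<bullet> \<xi> = \<xi>" "\<xi> \<in> Cel \<Longrightarrow> dm \<xi> = f \<Longrightarrow> \<xi> \<bullet> I f = \<xi>"
    by auto
qed

lemma hcomp_cell[simp]:
  assumes "\<xi> \<in> Cel" "\<eta> \<in> Cel" "sr (dm \<eta>) = tg (dm \<xi>)"
  shows "\<eta> \<star> \<xi> \<in> Cel" "dm (\<eta> \<star> \<xi>) = dm \<eta> \<odot> dm \<xi>" "cd (\<eta> \<star> \<xi>) = cd \<eta> \<odot> cd \<xi>"
proof -
  have "\<forall>x\<in>Obs. \<forall>y\<in>Obs. \<forall>z\<in>Obs. \<forall>f\<in>hom1 C x y. \<forall>f'\<in>hom1 C x y.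
          \<forall>g\<in>hom1 C y z. \<forall>g'\<in>hom1 C y z. \<forall>\<xi>\<in>hom2 C f f'. \<forall>\<eta>\<in>hom2 C g g'.
            \<eta> \<star> \<xi> \<in> hom2 C (g \<odot> f) (g' \<odot> f')"
    using twocat unfolding twocat_def by (elim conjE)
  from this[rule_format, of "sr (dm \<xi>)" "tg (dm \<xi>)" "tg (dm \<eta>)" "dm \<xi>" "cd \<xi>" "dm \<eta>" "cd \<eta>" \<xi> \<eta>]
  have "\<eta> \<star> \<xi> \<in> hom2 C (dm \<eta> \<odot> dm \<xi>) (cd \<eta> \<odot> cd \<xi>)"
    using assms by simp
  then show "\<eta> \<star> \<xi> \<in> Cel" "dm (\<eta> \<star> \<xi>) = dm \<eta> \<odot> dm \<xi>" "cd (\<eta> \<star> \<xi>) = cd \<eta> \<odot> cd \<xi>" by auto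
qed

lemma hcomp_assoc:
  assumes "\<xi> \<in> Cel" "\<eta> \<in> Cel" "\<theta> \<in> Cel" "sr (dm \<eta>) = tg (dm \<xi>)" "sr (dm \<theta>) = tg (dm \<eta>)"
  shows "\<theta> \<star> (\<eta> \<star> \<xi>) = (\<theta> \<star> \<eta>) \<star> \<xi>"
  using twocat assms unfolding twocat_def by blast

lemma hcomp_id2_id1[simp]:
  "\<xi> \<in> Cel \<Longrightarrow> tg (dm \<xi>) = x \<Longrightarrow> I (id1 x) \<star> \<xi> = \<xi>"
  "\<xi> \<in> Cel \<Longrightarrow> sr (dm \<xi>) = x \<Longrightarrow> \<xi> \<star> I (id1 x) = \<xi>"
proof -
  have "\<forall>\<xi>\<in>Cel. I (id1 (tg (dm \<xi>))) \<star> \<xi> = \<xi> \<and> \<xi> \<star> I (id1 (sr (dm \<xi>))) = \<xi>"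
    using twocat unfolding twocat_def by (elim conjE)
  then show "\<xi> \<in> Cel \<Longrightarrow> tg (dm \<xi>) = x \<Longrightarrow> I (id1 x) \<star> \<xi> = \<xi>"
    "\<xi> \<in> Cel \<Longrightarrow> sr (dm \<xi>) = x \<Longrightarrow> \<xi> \<star> I (id1 x) = \<xi>"
    by auto
qed

lemma hcomp_id2_id2[simp]: "f \<in> Arr \<Longrightarrow> g \<in> Arr \<Longrightarrow> sr g = tg f \<Longrightarrow> I g \<star> I f = I (g \<odot> f)"
proof -
  have "\<forall>f\<in>Arr. \<forall>g\<in>Arr. sr g = tg f \<longrightarrow> I (g \<odot> f) = I g \<star> I f"
    using twocat unfolding twocat_def by (elim conjE)
  then show "f \<in> Arr \<Longrightarrow> g \<in> Arr \<Longrightarrow> sr g = tg f \<Longrightarrow> I g \<star> I f = I (g \<odot> f)"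
    by simp
qed

lemma interchange:
  assumes "\<xi> \<in> Cel" "\<xi>' \<in> Cel" "\<eta> \<in> Cel" "\<eta>' \<in> Cel" "cd \<xi> = dm \<xi>'" "cd \<eta> = dm \<eta>'"
    "sr (dm \<eta>) = tg (dm \<xi>)"
  shows "(\<eta>' \<bullet> \<eta>) \<star> (\<xi>' \<bullet> \<xi>) = (\<eta>' \<star> \<xi>') \<bullet> (\<eta> \<star> \<xi>)"
proof -
  have "\<forall>x\<in>Obs. \<forall>y\<in>Obs. \<forall>z\<in>Obs. \<forall>f\<in>hom1 C x y. \<forall>f'\<in>hom1 C x y. \<forall>f''\<in>hom1 C x y.
          \<forall>g\<in>hom1 C y z. \<forall>g'\<in>hom1 C y z. \<forall>g''\<in>hom1 C y z.
          \<forall>\<xi>\<in>hom2 C f f'. \<forall>\<xi>'\<in>hom2 C f' f''. \<forall>\<eta>\<in>hom2 C g g'. \<forall>\<eta>'\<in>hom2 C g' g''.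
            (\<eta>' \<bullet> \<eta>) \<star> (\<xi>' \<bullet> \<xi>) = (\<eta>' \<star> \<xi>') \<bullet> (\<eta> \<star> \<xi>)"
    using twocat unfolding twocat_def by (elim conjE)
  note ax = this[rule_format, of "sr (dm \<xi>)" "tg (dm \<xi>)" "tg (dm \<eta>)" "dm \<xi>" "cd \<xi>" "cd \<xi>'"
      "dm \<eta>" "cd \<eta>" "cd \<eta>'" \<xi> \<xi>' \<eta> \<eta>']
  have "sr (cd \<xi>') = sr (dm \<xi>)" "tg (cd \<xi>') = tg (dm \<xi>)"
    "sr (cd \<eta>') = sr (dm \<eta>)" "tg (cd \<eta>') = tg (dm \<eta>)"
    using assms cell_dom_cod by metis+
  then show ?thesis using assms by (intro ax) simp_all
qed


definition WL where "WL g \<xi> = I g \<star> \<xi>"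
definition WR where "WR \<xi> f = \<xi> \<star> I f"

lemma fold_WL[simp]: "I g \<star> \<xi> = WL g \<xi>"
  by (simp add: WL_def)

lemma fold_WR[simp]: "\<xi> \<star> I f = WR \<xi> f"
  by (simp add: WR_def)

lemma WL_cell[simp]:
  "g \<in> Arr \<Longrightarrow> \<xi> \<in> Cel \<Longrightarrow> sr g = tg (dm \<xi>) \<Longrightarrow> WL g \<xi> \<in> Cel"
  "g \<in> Arr \<Longrightarrow> \<xi> \<in> Cel \<Longrightarrow> sr g = tg (dm \<xi>) \<Longrightarrow> dm (WL g \<xi>) = g \<odot> dm \<xi>"
  "g \<in> Arr \<Longrightarrow> \<xi> \<in> Cel \<Longrightarrow> sr g = tg (dm \<xi>) \<Longrightarrow> cd (WL g \<xi>) = g \<odot> cd \<xi>"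
  unfolding WL_def by (simp_all del: fold_WL)

lemma WR_cell[simp]:
  "f \<in> Arr \<Longrightarrow> \<xi> \<in> Cel \<Longrightarrow> sr (dm \<xi>) = tg f \<Longrightarrow> WR \<xi> f \<in> Cel"
  "f \<in> Arr \<Longrightarrow> \<xi> \<in> Cel \<Longrightarrow> sr (dm \<xi>) = tg f \<Longrightarrow> dm (WR \<xi> f) = dm \<xi> \<odot> f"
  "f \<in> Arr \<Longrightarrow> \<xi> \<in> Cel \<Longrightarrow> sr (dm \<xi>) = tg f \<Longrightarrow> cd (WR \<xi> f) = cd \<xi> \<odot> f"
  unfolding WR_def by (simp_all del: fold_WR)

lemma WL_id2[simp]: "g \<in> Arr \<Longrightarrow> f \<in> Arr \<Longrightarrow> sr g = tg f \<Longrightarrow> WL g (I f) = I (g \<odot> f)"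
  unfolding WL_def by (simp del: fold_WL fold_WR)

lemma WR_id2[simp]: "g \<in> Arr \<Longrightarrow> f \<in> Arr \<Longrightarrow> sr g = tg f \<Longrightarrow> WR (I g) f = I (g \<odot> f)"
  unfolding WR_def by (simp del: fold_WL fold_WR)

lemma WL_id1[simp]: "\<xi> \<in> Cel \<Longrightarrow> tg (dm \<xi>) = x \<Longrightarrow> WL (id1 x) \<xi> = \<xi>"
  unfolding WL_def by (simp del: fold_WL fold_WR)

lemma WR_id1[simp]: "\<xi> \<in> Cel \<Longrightarrow> sr (dm \<xi>) = x \<Longrightarrow> WR \<xi> (id1 x) = \<xi>"
  unfolding WR_def by (simp del: fold_WL fold_WR)

lemma WL_comp[simp]:
  "g \<in> Arr \<Longrightarrow> f \<in> Arr \<Longrightarrow> \<xi> \<in> Cel \<Longrightarrow> sr g = tg f \<Longrightarrow> sr f = tg (dm \<xi>) \<Longrightarrow>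
     WL (g \<odot> f) \<xi> = WL g (WL f \<xi>)"
  unfolding WL_def using hcomp_assoc[of \<xi> "I f" "I g"] by (simp del: fold_WL fold_WR)

lemma WR_comp[simp]:
  "g \<in> Arr \<Longrightarrow> f \<in> Arr \<Longrightarrow> \<xi> \<in> Cel \<Longrightarrow> sr g = tg f \<Longrightarrow> sr (dm \<xi>) = tg g \<Longrightarrow>
     WR \<xi> (g \<odot> f) = WR (WR \<xi> g) f"
  unfolding WR_def using hcomp_assoc[of "I f" "I g" \<xi>] by (simp del: fold_WL fold_WR)

lemma WR_WL[simp]:
  "g \<in> Arr \<Longrightarrow> f \<in> Arr \<Longrightarrow> \<xi> \<in> Cel \<Longrightarrow> sr g = tg (dm \<xi>) \<Longrightarrow> sr (dm \<xi>) = tg f \<Longrightarrow>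
     WR (WL g \<xi>) f = WL g (WR \<xi> f)"
  unfolding WR_def WL_def using hcomp_assoc[of "I f" \<xi> "I g"] by (simp del: fold_WL fold_WR)

lemma WL_vcomp[simp]:
  assumes "\<xi> \<in> Cel" "\<eta> \<in> Cel" "cd \<xi> = dm \<eta>" "g \<in> Arr" "sr g = tg (dm \<xi>)"
  shows "WL g (\<eta> \<bullet> \<xi>) = WL g \<eta> \<bullet> WL g \<xi>"
  using interchange[of \<xi> \<eta> "I g" "I g"] assms unfolding WL_def by (simp del: fold_WL fold_WR)

lemma WR_vcomp[simp]:
  assumes "\<xi> \<in> Cel" "\<eta> \<in> Cel" "cd \<xi> = dm \<eta>" "f \<in> Arr" "tg f = sr (dm \<xi>)"
  shows "WR (\<eta> \<bullet> \<xi>) f = WR \<eta> f \<bullet> WR \<xi> f"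
  using interchange[of "I f" "I f" \<xi> \<eta>] assms unfolding WR_def by (simp del: fold_WL fold_WR)

lemma WR_WL_exchange:
  assumes "\<xi> \<in> Cel" "\<eta> \<in> Cel" "sr (dm \<eta>) = tg (dm \<xi>)"
  shows "WR \<eta> (cd \<xi>) \<bullet> WL (dm \<eta>) \<xi> = WL (cd \<eta>) \<xi> \<bullet> WR \<eta> (dm \<xi>)"
proof -
  have "WR \<eta> (cd \<xi>) \<bullet> WL (dm \<eta>) \<xi> = (\<eta> \<bullet> I (dm \<eta>)) \<star> (I (cd \<xi>) \<bullet> \<xi>)"
    using interchange[of \<xi> "I (cd \<xi>)" "I (dm \<eta>)" \<eta>] assms by simp
  also have "\<dots> = (I (cd \<eta>) \<bullet> \<eta>) \<star> (\<xi> \<bullet> I (dm \<xi>))"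
    using assms by simp
  also have "\<dots> = WL (cd \<eta>) \<xi> \<bullet> WR \<eta> (dm \<xi>)"
    using interchange[of "I (dm \<xi>)" \<xi> \<eta> "I (cd \<eta>)"] assms by simp
  finally show ?thesis .
qed

lemma comp_eq_extend:
  assumes "X \<in> Arr" "a \<in> Arr" "b \<in> Arr" "c \<in> Arr" "d \<in> Arr" "sr b = tg a" "sr d = tg c"
    "tg X = sr a" "tg X = sr c" "b \<odot> a = d \<odot> c"
  shows "b \<odot> a \<odot> X = d \<odot> c \<odot> X"
  using assms comp_assoc[of X a b] comp_assoc[of X c d] by simp

lemma vcomp_eq_extend:
  "\<beta> \<bullet> \<alpha> = \<gamma> \<Longrightarrow> \<alpha> \<in> Cel \<Longrightarrow> \<beta> \<in> Cel \<Longrightarrow> cd \<alpha> = dm \<beta> \<Longrightarrow> Z \<in> Cel \<Longrightarrow> cd Z = dm \<alpha> \<Longrightarrow>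
     \<beta> \<bullet> \<alpha> \<bullet> Z = \<gamma> \<bullet> Z"
  using vcomp_assoc[of Z \<alpha> \<beta>] by simp

lemma WL_vcomp_eq:
  "\<eta> \<bullet> \<xi> = \<zeta> \<Longrightarrow> \<xi> \<in> Cel \<Longrightarrow> \<eta> \<in> Cel \<Longrightarrow> cd \<xi> = dm \<eta> \<Longrightarrow> g \<in> Arr \<Longrightarrow> sr g = tg (dm \<xi>) \<Longrightarrow>
     WL g \<eta> \<bullet> WL g \<xi> = WL g \<zeta>"
  by (metis WL_vcomp)

lemma WR_vcomp_eq:
  "\<eta> \<bullet> \<xi> = \<zeta> \<Longrightarrow> \<xi> \<in> Cel \<Longrightarrow> \<eta> \<in> Cel \<Longrightarrow> cd \<xi> = dm \<eta> \<Longrightarrow> f \<in> Arr \<Longrightarrow> tg f = sr (dm \<xi>) \<Longrightarrow>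
     WR \<eta> f \<bullet> WR \<xi> f = WR \<zeta> f"
  by (metis WR_vcomp)

end

section \<open>The cokernel diagram\<close>

lemma cat_iso_by_obj_surj: "cat_iso_by X HX Y HY F G \<Longrightarrow> y \<in> Y \<Longrightarrow> \<exists>x\<in>X. F x = y"
  unfolding cat_iso_by_def bij_betw_def by auto

lemma cat_iso_by_obj_map: "cat_iso_by X HX Y HY F G \<Longrightarrow> x \<in> X \<Longrightarrow> F x \<in> Y"
  unfolding cat_iso_by_def bij_betw_def by auto

lemma cat_iso_by_hom_surj:
  "cat_iso_by X HX Y HY F G \<Longrightarrow> a \<in> X \<Longrightarrow> b \<in> X \<Longrightarrow> \<eta> \<in> HY (F a) (F b) \<Longrightarrow> \<exists>\<xi>\<in>HX a b. G \<xi> = \<eta>"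
  unfolding cat_iso_by_def bij_betw_def by (metis imageE)

lemma cat_iso_by_hom_inj:
  "cat_iso_by X HX Y HY F G \<Longrightarrow> a \<in> X \<Longrightarrow> b \<in> X \<Longrightarrow> \<xi> \<in> HX a b \<Longrightarrow> \<xi>' \<in> HX a b \<Longrightarrow> G \<xi> = G \<xi>' \<Longrightarrow>
     \<xi> = \<xi>'"
  unfolding cat_iso_by_def bij_betw_def inj_on_def by metis

lemma cat_iso_by_comp:
  assumes "cat_iso_by X HX Y HY F G" "cat_iso_by Y HY Z HZ F' G'"
    and "\<And>x. x \<in> X \<Longrightarrow> F'' x = F' (F x)"
    and "\<And>a b \<xi>. a \<in> X \<Longrightarrow> b \<in> X \<Longrightarrow> \<xi> \<in> HX a b \<Longrightarrow> G'' \<xi> = G' (G \<xi>)"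
  shows "cat_iso_by X HX Z HZ F'' G''"
  unfolding cat_iso_by_def
proof (intro conjI ballI)
  have F: "bij_betw F X Y" "bij_betw F' Y Z"
    using assms(1,2) unfolding cat_iso_by_def by blast+
  then show "bij_betw F'' X Z"
    using assms(3) bij_betw_trans bij_betw_cong[of X F'' "F' \<circ> F" Z] by fastforce
  fix a b assume ab: "a \<in> X" "b \<in> X"
  then have "F a \<in> Y" "F b \<in> Y" using F(1) by (auto simp: bij_betw_def)
  then have "bij_betw (G' \<circ> G) (HX a b) (HZ (F' (F a)) (F' (F b)))"
    using assms(1,2) ab unfolding cat_iso_by_def by (blast intro: bij_betw_trans)
  then show "bij_betw G'' (HX a b) (HZ (F'' a) (F'' b))"
    using assms(3,4) ab bij_betw_cong[of "HX a b" G'' "G' \<circ> G"] by simp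
qed

lemma cat_iso_by_op:
  assumes iso: "cat_iso_by X HX Y HY F G"
    and \<sigma>: "bij_betw \<sigma> Y Y'" "\<And>x. x \<in> X \<Longrightarrow> F' x = \<sigma> (F x)"
    and \<tau>: "inj \<tau>" "\<And>a b. a \<in> Y \<Longrightarrow> b \<in> Y \<Longrightarrow> HY' (\<sigma> a) (\<sigma> b) = \<tau> ` HY b a" "\<And>\<xi>. G' \<xi> = \<tau> (G \<xi>)"
  shows "cat_iso_by X (\<lambda>a b. HX b a) Y' HY' F' G'"
  unfolding cat_iso_by_def
proof (intro conjI ballI)
  have F: "bij_betw F X Y"
    using iso unfolding cat_iso_by_def by blast
  then show "bij_betw F' X Y'"
    using \<sigma> bij_betw_trans bij_betw_cong[of X F' "\<sigma> \<circ> F" Y'] by fastforce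
  fix a b assume ab: "a \<in> X" "b \<in> X"
  then have "F a \<in> Y" "F b \<in> Y" using F by (auto simp: bij_betw_def)
  moreover have "bij_betw (\<tau> \<circ> G) (HX b a) (\<tau> ` HY (F b) (F a))"
    using iso ab \<tau>(1) unfolding cat_iso_by_def
    by (blast intro: bij_betw_trans inj_on_imp_bij_betw inj_on_subset)
  ultimately show "bij_betw G' (HX b a) (HY' (F' a) (F' b))"
    using \<sigma>(2) \<tau>(2,3) ab bij_betw_cong[of "HX b a" G' "\<tau> \<circ> G"] by simp
qed

locale cokernel_context = two_category +
  fixes p P d0 d1 \<alpha> Q D0 D1 D2 s0
  assumes cokernel: "cokernel_diagram C p P d0 d1 \<alpha> Q D0 D1 D2 s0"
begin

abbreviation "B \<equiv> tg p"
abbreviation "E \<equiv> sr p"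

lemma opcomma_P: "opcomma C p P d0 d1 \<alpha>"
  using cokernel unfolding cokernel_diagram_def by blast

lemma pushout_Q: "pushout2 C d0 d1 Q D2 D0"
  using cokernel unfolding cokernel_diagram_def by blast

lemma cokernel_cells[simp]:
  "p \<in> Arr" "P \<in> Obs" "d0 \<in> Arr" "d1 \<in> Arr" "sr d0 = B" "sr d1 = B" "tg d0 = P" "tg d1 = P"
  "\<alpha> \<in> Cel" "dm \<alpha> = d1 \<odot> p" "cd \<alpha> = d0 \<odot> p" "Q \<in> Obs" "D0 \<in> Arr" "D2 \<in> Arr"
  "sr D0 = P" "tg D0 = Q" "sr D2 = P" "tg D2 = Q" "D1 \<in> Arr" "sr D1 = P" "tg D1 = Q"
  "s0 \<in> Arr" "sr s0 = P" "tg s0 = B"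
  using opcomma_P pushout_Q cokernel
  unfolding opcomma_def pushout2_def cokernel_diagram_def by auto

lemma cokernel_eqs:
  "D2 \<odot> d0 = D0 \<odot> d1" "D1 \<odot> d1 = D2 \<odot> d1" "D1 \<odot> d0 = D0 \<odot> d0"
  "WL D1 \<alpha> = WL D0 \<alpha> \<bullet> WL D2 \<alpha>" "s0 \<odot> d0 = id1 B" "s0 \<odot> d1 = id1 B" "WL s0 \<alpha> = I p"
  using pushout_Q cokernel unfolding pushout2_def cokernel_diagram_def by auto

lemma cokernel_eqs_ctx[simp]:
  "X \<in> Arr \<Longrightarrow> tg X = B \<Longrightarrow> D0 \<odot> d1 \<odot> X = D2 \<odot> d0 \<odot> X"
  "X \<in> Arr \<Longrightarrow> tg X = B \<Longrightarrow> D1 \<odot> d1 \<odot> X = D2 \<odot> d1 \<odot> X"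
  "X \<in> Arr \<Longrightarrow> tg X = B \<Longrightarrow> D1 \<odot> d0 \<odot> X = D0 \<odot> d0 \<odot> X"
  "X \<in> Arr \<Longrightarrow> tg X = B \<Longrightarrow> s0 \<odot> d0 \<odot> X = X"
  "X \<in> Arr \<Longrightarrow> tg X = B \<Longrightarrow> s0 \<odot> d1 \<odot> X = X"
  using comp_eq_extend[of X d1 D0 d0 D2] comp_eq_extend[of X d1 D1 d1 D2]
    comp_eq_extend[of X d0 D1 d0 D0] comp_eq_extend[of X d0 s0 "id1 B" "id1 B"]
    comp_eq_extend[of X d1 s0 "id1 B" "id1 B"] cokernel_eqs
  by simp_all

lemmas cokernel_eqs_simp[simp] = cokernel_eqs(1)[symmetric] cokernel_eqs(2-7)

lemma cokernel_eqs_WL[simp]: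
  "\<xi> \<in> Cel \<Longrightarrow> tg (dm \<xi>) = B \<Longrightarrow> WL D0 (WL d1 \<xi>) = WL D2 (WL d0 \<xi>)"
  "\<xi> \<in> Cel \<Longrightarrow> tg (dm \<xi>) = B \<Longrightarrow> WL D1 (WL d1 \<xi>) = WL D2 (WL d1 \<xi>)"
  "\<xi> \<in> Cel \<Longrightarrow> tg (dm \<xi>) = B \<Longrightarrow> WL D1 (WL d0 \<xi>) = WL D0 (WL d0 \<xi>)"
  "\<xi> \<in> Cel \<Longrightarrow> tg (dm \<xi>) = B \<Longrightarrow> WL s0 (WL d0 \<xi>) = \<xi>"
  "\<xi> \<in> Cel \<Longrightarrow> tg (dm \<xi>) = B \<Longrightarrow> WL s0 (WL d1 \<xi>) = \<xi>"
  using WL_comp[of D0 d1 \<xi>] WL_comp[of D2 d0 \<xi>] WL_comp[of D1 d1 \<xi>] WL_comp[of D2 d1 \<xi>]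
    WL_comp[of D1 d0 \<xi>] WL_comp[of D0 d0 \<xi>] WL_comp[of s0 d0 \<xi>] WL_comp[of s0 d1 \<xi>]
  by (simp_all del: WL_comp)

lemma opcomma_iso:
  "y \<in> Obs \<Longrightarrow> cat_iso_by (hom1 C P y) (hom2 C)
     {(h0, h1, \<beta>). h0 \<in> hom1 C B y \<and> h1 \<in> hom1 C B y \<and> \<beta> \<in> hom2 C (h1 \<odot> p) (h0 \<odot> p)}
     (\<lambda>(h0, h1, \<beta>) (h0', h1', \<beta>').
        {(\<xi>0, \<xi>1). \<xi>0 \<in> hom2 C h0 h0' \<and> \<xi>1 \<in> hom2 C h1 h1' \<and> (\<xi>0 \<star> I p) \<bullet> \<beta> = \<beta>' \<bullet> (\<xi>1 \<star> I p)})
     (\<lambda>h. (h \<odot> d0, h \<odot> d1, I h \<star> \<alpha>))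
     (\<lambda>\<xi>. (\<xi> \<star> I d0, \<xi> \<star> I d1))"
  using opcomma_P unfolding opcomma_def by (elim conjE) (drule bspec)

lemma opcomma_arr_ex:
  assumes "y \<in> Obs" "h0 \<in> Arr" "h1 \<in> Arr" "sr h0 = B" "sr h1 = B" "tg h0 = y" "tg h1 = y"
    "\<beta> \<in> Cel" "dm \<beta> = h1 \<odot> p" "cd \<beta> = h0 \<odot> p"
  shows "\<exists>h. h \<in> Arr \<and> sr h = P \<and> tg h = y \<and> h \<odot> d0 = h0 \<and> h \<odot> d1 = h1 \<and> WL h \<alpha> = \<beta>"
proof -
  have "\<exists>h\<in>hom1 C P y. (h \<odot> d0, h \<odot> d1, I h \<star> \<alpha>) = (h0, h1, \<beta>)"
    by (rule cat_iso_by_obj_surj[OF opcomma_iso[OF assms(1)]]) (use assms in simp)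
  then show ?thesis by auto
qed

lemma opcomma_cell_ex:
  assumes "h \<in> Arr" "sr h = P" "tg h = y" "h' \<in> Arr" "sr h' = P" "tg h' = y"
    "\<xi>0 \<in> Cel" "dm \<xi>0 = h \<odot> d0" "cd \<xi>0 = h' \<odot> d0" "\<xi>1 \<in> Cel" "dm \<xi>1 = h \<odot> d1" "cd \<xi>1 = h' \<odot> d1"
    "WR \<xi>0 p \<bullet> WL h \<alpha> = WL h' \<alpha> \<bullet> WR \<xi>1 p"
  shows "\<exists>\<xi>. \<xi> \<in> Cel \<and> dm \<xi> = h \<and> cd \<xi> = h' \<and> WR \<xi> d0 = \<xi>0 \<and> WR \<xi> d1 = \<xi>1"
proof -
  have "y \<in> Obs" using arr_src_trg(2)[OF assms(1)] assms(3) by simp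
  then have "\<exists>\<xi>\<in>hom2 C h h'. (\<xi> \<star> I d0, \<xi> \<star> I d1) = (\<xi>0, \<xi>1)"
    by (rule cat_iso_by_hom_surj[OF opcomma_iso]) (use assms in simp_all)
  then show ?thesis by auto
qed

lemma pushout_iso:
  "y \<in> Obs \<Longrightarrow> cat_iso_by (hom1 C Q y) (hom2 C)
     {(k0, k1). k0 \<in> hom1 C P y \<and> k1 \<in> hom1 C P y \<and> k0 \<odot> d0 = k1 \<odot> d1}
     (\<lambda>(k0, k1) (k0', k1').
        {(\<xi>0, \<xi>1). \<xi>0 \<in> hom2 C k0 k0' \<and> \<xi>1 \<in> hom2 C k1 k1' \<and> \<xi>0 \<star> I d0 = \<xi>1 \<star> I d1})
     (\<lambda>k. (k \<odot> D2, k \<odot> D0))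
     (\<lambda>\<xi>. (\<xi> \<star> I D2, \<xi> \<star> I D0))"
  using pushout_Q unfolding pushout2_def by (elim conjE) (drule bspec, simp_all)

lemma pushout_arr_ex:
  assumes "y \<in> Obs" "k0 \<in> Arr" "k1 \<in> Arr" "sr k0 = P" "sr k1 = P" "tg k0 = y" "tg k1 = y"
    "k0 \<odot> d0 = k1 \<odot> d1"
  shows "\<exists>k. k \<in> Arr \<and> sr k = Q \<and> tg k = y \<and> k \<odot> D2 = k0 \<and> k \<odot> D0 = k1"
proof -
  have "\<exists>k\<in>hom1 C Q y. (k \<odot> D2, k \<odot> D0) = (k0, k1)"
    by (rule cat_iso_by_obj_surj[OF pushout_iso[OF assms(1)]]) (use assms in simp)
  then show ?thesis by auto
qed

lemma pushout_cell_ex: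
  assumes "h \<in> Arr" "sr h = Q" "tg h = y" "h' \<in> Arr" "sr h' = Q" "tg h' = y"
    "\<xi>0 \<in> Cel" "dm \<xi>0 = h \<odot> D2" "cd \<xi>0 = h' \<odot> D2" "\<xi>1 \<in> Cel" "dm \<xi>1 = h \<odot> D0" "cd \<xi>1 = h' \<odot> D0"
    "WR \<xi>0 d0 = WR \<xi>1 d1"
  shows "\<exists>\<xi>. \<xi> \<in> Cel \<and> dm \<xi> = h \<and> cd \<xi> = h' \<and> WR \<xi> D2 = \<xi>0 \<and> WR \<xi> D0 = \<xi>1"
proof -
  have "y \<in> Obs" using arr_src_trg(2)[OF assms(1)] assms(3) by simp
  then have "\<exists>\<xi>\<in>hom2 C h h'. (\<xi> \<star> I D2, \<xi> \<star> I D0) = (\<xi>0, \<xi>1)"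
    by (rule cat_iso_by_hom_surj[OF pushout_iso]) (use assms in simp_all)
  then show ?thesis by auto
qed

end

section \<open>Adjunctions and adjoint equivalences\<close>

context two_category
begin

lemma adjunctionD:
  assumes "adjunction C l r \<eta> \<epsilon>"
  shows "l \<in> Arr" "r \<in> Arr" "sr r = tg l" "tg r = sr l"
    "\<eta> \<in> Cel" "dm \<eta> = id1 (sr l)" "cd \<eta> = r \<odot> l" "\<epsilon> \<in> Cel" "dm \<epsilon> = l \<odot> r" "cd \<epsilon> = id1 (tg l)"
    "WR \<epsilon> l \<bullet> WL l \<eta> = I l" "WL r \<epsilon> \<bullet> WR \<eta> r = I r"
  using assms unfolding adjunction_def by auto

lemma adjunctionI:
  assumes "l \<in> Arr" "r \<in> Arr" "sr r = tg l" "tg r = sr l"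
    "\<eta> \<in> Cel" "dm \<eta> = id1 (sr l)" "cd \<eta> = r \<odot> l" "\<epsilon> \<in> Cel" "dm \<epsilon> = l \<odot> r" "cd \<epsilon> = id1 (tg l)"
    "WR \<epsilon> l \<bullet> WL l \<eta> = I l" "WL r \<epsilon> \<bullet> WR \<eta> r = I r"
  shows "adjunction C l r \<eta> \<epsilon>"
  unfolding adjunction_def using assms by simp

end

locale composable_adjunctions = two_category +
  fixes f u \<eta>1 \<epsilon>1 g e \<eta>2 \<epsilon>2
  assumes adj1: "adjunction C f u \<eta>1 \<epsilon>1" and adj2: "adjunction C g e \<eta>2 \<epsilon>2"
    and composable: "sr g = tg f"
begin

lemmas adj1_simps[simp] = adjunctionD(1-10)[OF adj1]
lemmas adj2_simps[simp] = adjunctionD(1-10)[OF adj2]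
declare composable[simp]

definition "unit = WL u (WR \<eta>2 f) \<bullet> \<eta>1"
definition "counit = \<epsilon>2 \<bullet> WL g (WR \<epsilon>1 e)"

lemma unit_counit_cells[simp]:
  "unit \<in> Cel" "dm unit = id1 (sr f)" "cd unit = u \<odot> e \<odot> g \<odot> f"
  "counit \<in> Cel" "dm counit = g \<odot> f \<odot> u \<odot> e" "cd counit = id1 (tg g)"
  unfolding unit_def counit_def by simp_all

lemma triangle_left: "WR counit (g \<odot> f) \<bullet> WL (g \<odot> f) unit = I (g \<odot> f)"
proof -
  have "WR (WR (WR \<epsilon>1 e) g) f \<bullet> WL f (WL u (WR \<eta>2 f)) = WR \<eta>2 f \<bullet> WR \<epsilon>1 f"
    using WR_WL_exchange[of "WR \<eta>2 f" \<epsilon>1] by simp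
  then have "WL g (WR (WR (WR \<epsilon>1 e) g) f) \<bullet> WL g (WL f (WL u (WR \<eta>2 f))) = WL g (WR \<eta>2 f \<bullet> WR \<epsilon>1 f)"
    by (rule WL_vcomp_eq) simp_all
  then have exch: "WL g (WR (WR (WR \<epsilon>1 e) g) f) \<bullet> WL g (WL f (WL u (WR \<eta>2 f))) =
      WL g (WR \<eta>2 f) \<bullet> WL g (WR \<epsilon>1 f)"
    by simp
  have "WR (WR \<epsilon>2 g) f \<bullet> WR (WL g \<eta>2) f = WR (I g) f"
    by (rule WR_vcomp_eq[OF adjunctionD(11)[OF adj2]]) simp_all
  then have tri2: "WR (WR \<epsilon>2 g) f \<bullet> WL g (WR \<eta>2 f) = I (g \<odot> f)"
    by simp
  have "WL g (WR \<epsilon>1 f) \<bullet> WL g (WL f \<eta>1) = WL g (I f)"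
    by (rule WL_vcomp_eq[OF adjunctionD(11)[OF adj1]]) simp_all
  then have tri1: "WL g (WR \<epsilon>1 f) \<bullet> WL g (WL f \<eta>1) = I (g \<odot> f)"
    by simp
  have "WR counit (g \<odot> f) \<bullet> WL (g \<odot> f) unit =
      WR (WR \<epsilon>2 g) f \<bullet> WL g (WR (WR (WR \<epsilon>1 e) g) f) \<bullet> WL g (WL f (WL u (WR \<eta>2 f))) \<bullet> WL g (WL f \<eta>1)"
    unfolding unit_def counit_def by simp
  also have "\<dots> = WR (WR \<epsilon>2 g) f \<bullet> WL g (WR \<eta>2 f) \<bullet> WL g (WR \<epsilon>1 f) \<bullet> WL g (WL f \<eta>1)"
    using vcomp_eq_extend[OF exch] by simp
  also have "\<dots> = I (g \<odot> f)"
    using tri1 tri2 by simp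
  finally show ?thesis .
qed

lemma triangle_right: "WL (u \<odot> e) counit \<bullet> WR unit (u \<odot> e) = I (u \<odot> e)"
proof -
  have "WL e (WL g (WR \<epsilon>1 e)) \<bullet> WR (WR (WR \<eta>2 f) u) e = WR \<eta>2 e \<bullet> WR \<epsilon>1 e"
    using WR_WL_exchange[of "WR \<epsilon>1 e" \<eta>2] by simp
  then have "WL u (WL e (WL g (WR \<epsilon>1 e))) \<bullet> WL u (WR (WR (WR \<eta>2 f) u) e) = WL u (WR \<eta>2 e \<bullet> WR \<epsilon>1 e)"
    by (rule WL_vcomp_eq) simp_all
  then have exch: "WL u (WL e (WL g (WR \<epsilon>1 e))) \<bullet> WL u (WR (WR (WR \<eta>2 f) u) e) =
      WL u (WR \<eta>2 e) \<bullet> WL u (WR \<epsilon>1 e)"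
    by simp
  have "WL u (WL e \<epsilon>2) \<bullet> WL u (WR \<eta>2 e) = WL u (I e)"
    by (rule WL_vcomp_eq[OF adjunctionD(12)[OF adj2]]) simp_all
  then have tri2: "WL u (WL e \<epsilon>2) \<bullet> WL u (WR \<eta>2 e) = I (u \<odot> e)"
    by simp
  have "WR (WL u \<epsilon>1) e \<bullet> WR (WR \<eta>1 u) e = WR (I u) e"
    by (rule WR_vcomp_eq[OF adjunctionD(12)[OF adj1]]) simp_all
  then have tri1: "WL u (WR \<epsilon>1 e) \<bullet> WR (WR \<eta>1 u) e = I (u \<odot> e)"
    by simp
  have "WL (u \<odot> e) counit \<bullet> WR unit (u \<odot> e) =
      WL u (WL e \<epsilon>2) \<bullet> WL u (WL e (WL g (WR \<epsilon>1 e))) \<bullet> WL u (WR (WR (WR \<eta>2 f) u) e) \<bullet> WR (WR \<eta>1 u) e"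
    unfolding unit_def counit_def by simp
  also have "\<dots> = WL u (WL e \<epsilon>2) \<bullet> WL u (WR \<eta>2 e) \<bullet> WL u (WR \<epsilon>1 e) \<bullet> WR (WR \<eta>1 u) e"
    using vcomp_eq_extend[OF exch] by simp
  also have "\<dots> = I (u \<odot> e)"
    using tri1 tri2 by simp
  finally show ?thesis .
qed

lemma adjunction_comp: "adjunction C (g \<odot> f) (u \<odot> e) unit counit"
  by (rule adjunctionI) (use triangle_left triangle_right in simp_all)

end

lemma (in two_category) idempotent_right_invertible_eq_id:
  assumes "\<phi> \<in> Cel" "\<psi> \<in> Cel" "dm \<phi> = f" "cd \<phi> = f" "dm \<psi> = f" "cd \<psi> = f"
    and "\<phi> \<bullet> \<phi> = \<phi>" "\<phi> \<bullet> \<psi> = I f"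
  shows "\<phi> = I f"
proof -
  have "\<phi> = \<phi> \<bullet> (\<phi> \<bullet> \<psi>)" using assms by simp
  also have "\<dots> = (\<phi> \<bullet> \<phi>) \<bullet> \<psi>" using assms by (intro vcomp_assoc[symmetric]) simp_all
  also have "\<dots> = I f" using assms by simp
  finally show ?thesis .
qed

text \<open>An equivalence is promoted to an adjoint equivalence by keeping the inverse of
  \<open>\<epsilon>\<close> as unit and correcting the counit; the resulting zigzag composite is an idempotent
  with a right inverse, hence an identity.\<close>

locale equivalence_data = two_category +
  fixes e g \<eta> \<eta>' \<epsilon> \<epsilon>'
  assumes arrs: "e \<in> Arr" "g \<in> Arr" "sr g = tg e" "tg g = sr e"
    and unit_iso: "\<eta> \<in> Cel" "dm \<eta> = id1 (sr e)" "cd \<eta> = g \<odot> e"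
      "\<eta>' \<in> Cel" "dm \<eta>' = g \<odot> e" "cd \<eta>' = id1 (sr e)"
      "\<eta>' \<bullet> \<eta> = I (id1 (sr e))" "\<eta> \<bullet> \<eta>' = I (g \<odot> e)"
    and counit_iso: "\<epsilon> \<in> Cel" "dm \<epsilon> = e \<odot> g" "cd \<epsilon> = id1 (tg e)"
      "\<epsilon>' \<in> Cel" "dm \<epsilon>' = id1 (tg e)" "cd \<epsilon>' = e \<odot> g"
      "\<epsilon>' \<bullet> \<epsilon> = I (e \<odot> g)" "\<epsilon> \<bullet> \<epsilon>' = I (id1 (tg e))"
begin

declare arrs[simp] unit_iso(1-6)[simp] counit_iso(1-6)[simp]

definition "counit = \<eta>' \<bullet> WL g (WR \<epsilon> e) \<bullet> WR (WR \<eta> g) e"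
definition "counit_inv = WR (WR \<eta>' g) e \<bullet> WL g (WR \<epsilon>' e) \<bullet> \<eta>"

lemma counit_cells[simp]:
  "counit \<in> Cel" "dm counit = g \<odot> e" "cd counit = id1 (sr e)"
  "counit_inv \<in> Cel" "dm counit_inv = id1 (sr e)" "cd counit_inv = g \<odot> e"
  unfolding counit_def counit_inv_def by simp_all

lemma counit_counit_inv: "counit \<bullet> counit_inv = I (id1 (sr e))"
proof -
  have "WR \<eta> g \<bullet> WR \<eta>' g = WR (I (g \<odot> e)) g"
    by (rule WR_vcomp_eq[OF unit_iso(8)]) simp_all
  then have "WR \<eta> g \<bullet> WR \<eta>' g = I (g \<odot> e \<odot> g)" by simp
  then have "WR (WR \<eta> g) e \<bullet> WR (WR \<eta>' g) e = WR (I (g \<odot> e \<odot> g)) e"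
    by (rule WR_vcomp_eq) simp_all
  then have inv1: "WR (WR \<eta> g) e \<bullet> WR (WR \<eta>' g) e = I (g \<odot> e \<odot> g \<odot> e)" by simp
  have "WR \<epsilon> e \<bullet> WR \<epsilon>' e = WR (I (id1 (tg e))) e"
    by (rule WR_vcomp_eq[OF counit_iso(8)]) simp_all
  then have "WR \<epsilon> e \<bullet> WR \<epsilon>' e = I e" by simp
  then have "WL g (WR \<epsilon> e) \<bullet> WL g (WR \<epsilon>' e) = WL g (I e)"
    by (rule WL_vcomp_eq) simp_all
  then have inv2: "WL g (WR \<epsilon> e) \<bullet> WL g (WR \<epsilon>' e) = I (g \<odot> e)" by simp
  have "counit \<bullet> counit_inv =
      \<eta>' \<bullet> WL g (WR \<epsilon> e) \<bullet> WR (WR \<eta> g) e \<bullet> WR (WR \<eta>' g) e \<bullet> WL g (WR \<epsilon>' e) \<bullet> \<eta>"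
    unfolding counit_def counit_inv_def by simp
  also have "\<dots> = \<eta>' \<bullet> WL g (WR \<epsilon> e) \<bullet> WL g (WR \<epsilon>' e) \<bullet> \<eta>"
    using vcomp_eq_extend[OF inv1] by simp
  also have "\<dots> = I (id1 (sr e))"
    using vcomp_eq_extend[OF inv2] unit_iso(7) by simp
  finally show ?thesis .
qed

lemma triangle_left: "WR counit g \<bullet> WL g \<epsilon>' = I g"
proof -
  have exch: "WR (WR (WR \<eta> g) e) g \<bullet> WL g \<epsilon>' = WL g (WL e (WL g \<epsilon>')) \<bullet> WR \<eta> g"
    using WR_WL_exchange[of "WL g \<epsilon>'" \<eta>] by simp
  have "WR (WR \<epsilon> e) g \<bullet> WL e (WL g \<epsilon>') = \<epsilon>' \<bullet> \<epsilon>"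
    using WR_WL_exchange[of \<epsilon>' \<epsilon>] by simp
  then have "WL g (WR (WR \<epsilon> e) g) \<bullet> WL g (WL e (WL g \<epsilon>')) = WL g (\<epsilon>' \<bullet> \<epsilon>)"
    by (rule WL_vcomp_eq) simp_all
  then have inv1: "WL g (WR (WR \<epsilon> e) g) \<bullet> WL g (WL e (WL g \<epsilon>')) = I (g \<odot> e \<odot> g)"
    using counit_iso(7) by simp
  have "WR \<eta>' g \<bullet> WR \<eta> g = WR (I (id1 (sr e))) g"
    by (rule WR_vcomp_eq[OF unit_iso(7)]) simp_all
  then have inv2: "WR \<eta>' g \<bullet> WR \<eta> g = I g" by simp
  have "WR counit g \<bullet> WL g \<epsilon>' =
      WR \<eta>' g \<bullet> WL g (WR (WR \<epsilon> e) g) \<bullet> WR (WR (WR \<eta> g) e) g \<bullet> WL g \<epsilon>'"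
    unfolding counit_def by simp
  also have "\<dots> = WR \<eta>' g \<bullet> WL g (WR (WR \<epsilon> e) g) \<bullet> WL g (WL e (WL g \<epsilon>')) \<bullet> WR \<eta> g"
    using exch by simp
  also have "\<dots> = I g"
    using vcomp_eq_extend[OF inv1] inv2 by simp
  finally show ?thesis .
qed

definition "zigzag = WL e counit \<bullet> WR \<epsilon>' e"
definition "zigzag_section = WR \<epsilon> e \<bullet> WL e counit_inv"

lemma zigzag_cells[simp]:
  "zigzag \<in> Cel" "dm zigzag = e" "cd zigzag = e"
  "zigzag_section \<in> Cel" "dm zigzag_section = e" "cd zigzag_section = e"
  unfolding zigzag_def zigzag_section_def by simp_all

lemma zigzag_zigzag_section: "zigzag \<bullet> zigzag_section = I e"
proof -
  have "WR \<epsilon>' e \<bullet> WR \<epsilon> e = WR (I (e \<odot> g)) e"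
    by (rule WR_vcomp_eq[OF counit_iso(7)]) simp_all
  then have inv1: "WR \<epsilon>' e \<bullet> WR \<epsilon> e = I (e \<odot> g \<odot> e)" by simp
  have "WL e counit \<bullet> WL e counit_inv = WL e (I (id1 (sr e)))"
    by (rule WL_vcomp_eq[OF counit_counit_inv]) simp_all
  then have inv2: "WL e counit \<bullet> WL e counit_inv = I e" by simp
  have "zigzag \<bullet> zigzag_section = WL e counit \<bullet> WR \<epsilon>' e \<bullet> WR \<epsilon> e \<bullet> WL e counit_inv"
    unfolding zigzag_def zigzag_section_def by simp
  also have "\<dots> = I e"
    using vcomp_eq_extend[OF inv1] inv2 by simp
  finally show ?thesis .
qed

lemma zigzag_idempotent: "zigzag \<bullet> zigzag = zigzag"
proof -
  have "counit \<bullet> WL g (WL e counit) = counit \<bullet> WR (WR counit g) e"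
    using WR_WL_exchange[of counit counit] by simp
  then have "WL e counit \<bullet> WL e (WL g (WL e counit)) = WL e (counit \<bullet> WR (WR counit g) e)"
    by (rule WL_vcomp_eq) simp_all
  then have exch1: "WL e counit \<bullet> WL e (WL g (WL e counit)) = WL e counit \<bullet> WL e (WR (WR counit g) e)"
    by simp
  have "WR (WR \<epsilon>' e) g \<bullet> \<epsilon>' = WL e (WL g \<epsilon>') \<bullet> \<epsilon>'"
    using WR_WL_exchange[of \<epsilon>' \<epsilon>'] by simp
  then have "WR (WR (WR \<epsilon>' e) g) e \<bullet> WR \<epsilon>' e = WR (WL e (WL g \<epsilon>') \<bullet> \<epsilon>') e"
    by (rule WR_vcomp_eq) simp_all
  then have exch2: "WR (WR (WR \<epsilon>' e) g) e \<bullet> WR \<epsilon>' e = WL e (WL g (WR \<epsilon>' e)) \<bullet> WR \<epsilon>' e"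
    by simp
  have "WR (WR counit g) e \<bullet> WR (WL g \<epsilon>') e = WR (I g) e"
    by (rule WR_vcomp_eq[OF triangle_left]) simp_all
  then have "WR (WR counit g) e \<bullet> WL g (WR \<epsilon>' e) = I (g \<odot> e)" by simp
  then have "WL e (WR (WR counit g) e) \<bullet> WL e (WL g (WR \<epsilon>' e)) = WL e (I (g \<odot> e))"
    by (rule WL_vcomp_eq) simp_all
  then have tri: "WL e (WR (WR counit g) e) \<bullet> WL e (WL g (WR \<epsilon>' e)) = I (e \<odot> g \<odot> e)" by simp
  have "zigzag \<bullet> zigzag = WL e counit \<bullet> WR \<epsilon>' e \<bullet> WL e counit \<bullet> WR \<epsilon>' e"
    unfolding zigzag_def by simp
  also have "\<dots> = WL e counit \<bullet> WL e (WL g (WL e counit)) \<bullet> WR (WR (WR \<epsilon>' e) g) e \<bullet> WR \<epsilon>' e"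
    using vcomp_eq_extend[OF WR_WL_exchange[of "WL e counit" \<epsilon>']] by simp
  also have "\<dots> = WL e counit \<bullet> WL e (WR (WR counit g) e) \<bullet> WR (WR (WR \<epsilon>' e) g) e \<bullet> WR \<epsilon>' e"
    using vcomp_eq_extend[OF exch1] by simp
  also have "\<dots> = WL e counit \<bullet> WL e (WR (WR counit g) e) \<bullet> WL e (WL g (WR \<epsilon>' e)) \<bullet> WR \<epsilon>' e"
    using exch2 by simp
  also have "\<dots> = zigzag"
    unfolding zigzag_def using vcomp_eq_extend[OF tri] by simp
  finally show ?thesis .
qed

lemma adjoint_equivalence: "adjunction C g e \<epsilon>' counit"
proof -
  have "zigzag = I e"
    by (rule idempotent_right_invertible_eq_id[OF _ _ _ _ _ _ zigzag_idempotent zigzag_zigzag_section]) simp_all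
  then show ?thesis
    by (intro adjunctionI) (use triangle_left in \<open>simp_all add: zigzag_def\<close>)
qed

end

lemma (in two_category) equivalence1_has_left_adjoint:
  assumes "equivalence1 C e"
  shows "\<exists>g \<eta> \<epsilon>. adjunction C g e \<eta> \<epsilon>"
proof -
  obtain g \<eta> \<epsilon> where e: "e \<in> Arr" and g: "g \<in> hom1 C (tg e) (sr e)"
    and \<eta>: "\<eta> \<in> hom2 C (id1 (sr e)) (g \<odot> e)" "invertible2 C \<eta>"
    and \<epsilon>: "\<epsilon> \<in> hom2 C (e \<odot> g) (id1 (tg e))" "invertible2 C \<epsilon>"
    using assms unfolding equivalence1_def by blast
  obtain \<eta>' where "\<eta>' \<in> hom2 C (g \<odot> e) (id1 (sr e))" "\<eta>' \<bullet> \<eta> = I (id1 (sr e))" "\<eta> \<bullet> \<eta>' = I (g \<odot> e)"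
    using \<eta> unfolding invertible2_def by auto
  moreover obtain \<epsilon>' where "\<epsilon>' \<in> hom2 C (id1 (tg e)) (e \<odot> g)" "\<epsilon>' \<bullet> \<epsilon> = I (e \<odot> g)"
    "\<epsilon> \<bullet> \<epsilon>' = I (id1 (tg e))"
    using \<epsilon> unfolding invertible2_def by auto
  ultimately interpret equivalence_data C e g \<eta> \<eta>' \<epsilon> \<epsilon>'
    using e g \<eta> \<epsilon> by unfold_locales simp_all
  show ?thesis using adjoint_equivalence by blast
qed

section \<open>Codensity monads and Eilenberg-Moore objects\<close>

locale codensity_context = two_category +
  fixes p t \<gamma> m \<eta>
  assumes codensity: "codensity_monad C p t \<gamma> m \<eta>"
begin

lemma kan: "right_kan C p p t \<gamma>"
  using codensity unfolding codensity_monad_def by blast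

lemma codensity_cells[simp]:
  "p \<in> Arr" "t \<in> Arr" "sr t = tg p" "tg t = tg p" "\<gamma> \<in> Cel" "dm \<gamma> = t \<odot> p" "cd \<gamma> = p"
  "m \<in> Cel" "dm m = t \<odot> t" "cd m = t" "\<eta> \<in> Cel" "dm \<eta> = id1 (tg p)" "cd \<eta> = t"
  using kan codensity unfolding right_kan_def codensity_monad_def by auto

lemma mult_char: "\<gamma> \<bullet> WR m p = \<gamma> \<bullet> WL t \<gamma>"
  using codensity unfolding codensity_monad_def by simp

lemma unit_char[simp]: "\<gamma> \<bullet> WR \<eta> p = I p"
  using codensity unfolding codensity_monad_def by simp

lemma kan_bij:
  "k \<in> Arr \<Longrightarrow> sr k = tg p \<Longrightarrow> tg k = tg p \<Longrightarrow>
     bij_betw (\<lambda>\<beta>. \<gamma> \<bullet> WR \<beta> p) (hom2 C k t) (hom2 C (k \<odot> p) p)"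
  using kan unfolding right_kan_def by simp

lemma kan_ex:
  assumes "k \<in> Arr" "sr k = tg p" "tg k = tg p" "\<sigma> \<in> Cel" "dm \<sigma> = k \<odot> p" "cd \<sigma> = p"
  shows "\<exists>\<beta>. \<beta> \<in> Cel \<and> dm \<beta> = k \<and> cd \<beta> = t \<and> \<gamma> \<bullet> WR \<beta> p = \<sigma>"
proof -
  have "\<sigma> \<in> (\<lambda>\<beta>. \<gamma> \<bullet> WR \<beta> p) ` hom2 C k t"
    using bij_betw_imp_surj_on[OF kan_bij[OF assms(1-3)]] assms(4-6) by simp
  then show ?thesis by auto
qed

lemma kan_uniq:
  assumes "k \<in> Arr" "sr k = tg p" "tg k = tg p" "\<beta> \<in> Cel" "dm \<beta> = k" "cd \<beta> = t"
    "\<beta>' \<in> Cel" "dm \<beta>' = k" "cd \<beta>' = t" "\<gamma> \<bullet> WR \<beta> p = \<gamma> \<bullet> WR \<beta>' p"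
  shows "\<beta> = \<beta>'"
  using bij_betw_imp_inj_on[OF kan_bij[OF assms(1-3)]] assms(4-10) unfolding inj_on_def by simp

lemma mult_assoc: "m \<bullet> WL t m = m \<bullet> WR m t"
proof (rule kan_uniq[of "t \<odot> t \<odot> t"])
  have exch: "WR m p \<bullet> WL t (WL t \<gamma>) = WL t \<gamma> \<bullet> WR (WR m t) p"
    using WR_WL_exchange[of \<gamma> m] by simp
  have "WL t \<gamma> \<bullet> WL t (WR m p) = WL t (\<gamma> \<bullet> WL t \<gamma>)"
    by (rule WL_vcomp_eq[OF mult_char]) simp_all
  then have mult_t: "WL t \<gamma> \<bullet> WL t (WR m p) = WL t \<gamma> \<bullet> WL t (WL t \<gamma>)" by simp
  have "\<gamma> \<bullet> WR (m \<bullet> WL t m) p = \<gamma> \<bullet> WR m p \<bullet> WL t (WR m p)" by simp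
  also have "\<dots> = \<gamma> \<bullet> WL t \<gamma> \<bullet> WL t (WL t \<gamma>)"
    using vcomp_eq_extend[OF mult_char] mult_t by simp
  also have "\<dots> = \<gamma> \<bullet> WR m p \<bullet> WL t (WL t \<gamma>)"
    using vcomp_eq_extend[OF mult_char] by simp
  also have "\<dots> = \<gamma> \<bullet> WL t \<gamma> \<bullet> WR (WR m t) p"
    using exch by simp
  also have "\<dots> = \<gamma> \<bullet> WR m p \<bullet> WR (WR m t) p"
    using vcomp_eq_extend[OF mult_char] by simp
  also have "\<dots> = \<gamma> \<bullet> WR (m \<bullet> WR m t) p" by simp
  finally show "\<gamma> \<bullet> WR (m \<bullet> WL t m) p = \<gamma> \<bullet> WR (m \<bullet> WR m t) p" .
qed simp_all

lemma mult_unit_left: "m \<bullet> WR \<eta> t = I t"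
proof (rule kan_uniq[of t])
  have exch: "WR \<eta> p \<bullet> \<gamma> = WL t \<gamma> \<bullet> WR (WR \<eta> t) p"
    using WR_WL_exchange[of \<gamma> \<eta>] by simp
  have "\<gamma> \<bullet> WR (m \<bullet> WR \<eta> t) p = \<gamma> \<bullet> WL t \<gamma> \<bullet> WR (WR \<eta> t) p"
    using vcomp_eq_extend[OF mult_char] by simp
  also have "\<dots> = \<gamma> \<bullet> WR \<eta> p \<bullet> \<gamma>" using exch by simp
  also have "\<dots> = \<gamma>" using vcomp_eq_extend[OF unit_char] by simp
  finally show "\<gamma> \<bullet> WR (m \<bullet> WR \<eta> t) p = \<gamma> \<bullet> WR (I t) p" by simp
qed simp_all

lemma mult_unit_right: "m \<bullet> WL t \<eta> = I t"
proof (rule kan_uniq[of t])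
  have "WL t \<gamma> \<bullet> WL t (WR \<eta> p) = WL t (I p)"
    by (rule WL_vcomp_eq[OF unit_char]) simp_all
  then have unit_t: "WL t \<gamma> \<bullet> WL t (WR \<eta> p) = I (t \<odot> p)" by simp
  have "\<gamma> \<bullet> WR (m \<bullet> WL t \<eta>) p = \<gamma> \<bullet> WL t \<gamma> \<bullet> WL t (WR \<eta> p)"
    using vcomp_eq_extend[OF mult_char] by simp
  also have "\<dots> = \<gamma>" using unit_t by simp
  finally show "\<gamma> \<bullet> WR (m \<bullet> WL t \<eta>) p = \<gamma> \<bullet> WR (I t) p" by simp
qed simp_all

definition "alg_obj y = {(h, \<beta>). h \<in> hom1 C y (tg p) \<and> \<beta> \<in> hom2 C (t \<odot> h) h \<and>
    \<beta> \<bullet> (I t \<star> \<beta>) = \<beta> \<bullet> (m \<star> I h) \<and> \<beta> \<bullet> (\<eta> \<star> I h) = I h}"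

definition "alg_hom = (\<lambda>(h, \<beta>) (h', \<beta>'). {\<xi>. \<xi> \<in> hom2 C h h' \<and> \<xi> \<bullet> \<beta> = \<beta>' \<bullet> (I t \<star> \<xi>)})"

lemma alg_obj_iff:
  "(h, a) \<in> alg_obj y \<longleftrightarrow> h \<in> Arr \<and> sr h = y \<and> tg h = tg p \<and> a \<in> Cel \<and> dm a = t \<odot> h \<and> cd a = h \<and>
     a \<bullet> WL t a = a \<bullet> WR m h \<and> a \<bullet> WR \<eta> h = I h"
  unfolding alg_obj_def by (simp only: mem_Collect_eq case_prod_conv hom1_iff hom2_iff fold_WL fold_WR conj_assoc)

lemma alg_hom_iff:
  "\<xi> \<in> alg_hom (h, a) (h', a') \<longleftrightarrow> \<xi> \<in> Cel \<and> dm \<xi> = h \<and> cd \<xi> = h' \<and> \<xi> \<bullet> a = a' \<bullet> WL t \<xi>"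
  unfolding alg_hom_def by (simp only: mem_Collect_eq case_prod_conv hom2_iff fold_WL conj_assoc)

lemma eilenberg_moore_iff:
  "eilenberg_moore C (tg p) t m \<eta> bT u \<mu> \<longleftrightarrow>
     bT \<in> Obs \<and> u \<in> hom1 C bT (tg p) \<and> \<mu> \<in> hom2 C (t \<odot> u) u \<and>
     (\<forall>y\<in>Obs. cat_iso_by (hom1 C y bT) (hom2 C) (alg_obj y) alg_hom
        (\<lambda>g. (u \<odot> g, \<mu> \<star> I g)) (\<lambda>\<xi>. I u \<star> \<xi>))"
  unfolding eilenberg_moore_def alg_obj_def alg_hom_def by (rule refl)

end

locale eilenberg_moore_context = codensity_context +
  fixes bT u \<mu>
  assumes eilenberg_moore: "eilenberg_moore C (tg p) t m \<eta> bT u \<mu>"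
begin

lemma forgetful_cells[simp]: "bT \<in> Obs" "u \<in> Arr" "sr u = bT" "tg u = tg p" "\<mu> \<in> Cel" "dm \<mu> = t \<odot> u" "cd \<mu> = u"
  using eilenberg_moore unfolding eilenberg_moore_iff by auto

lemma eilenberg_moore_iso:
  "y \<in> Obs \<Longrightarrow> cat_iso_by (hom1 C y bT) (hom2 C) (alg_obj y) alg_hom
     (\<lambda>g. (u \<odot> g, \<mu> \<star> I g)) (\<lambda>\<xi>. I u \<star> \<xi>)"
  using eilenberg_moore unfolding eilenberg_moore_iff by blast

lemma forgetful_algebra: "\<mu> \<bullet> WL t \<mu> = \<mu> \<bullet> WR m u" "\<mu> \<bullet> WR \<eta> u = I u"
proof -
  have "(u \<odot> id1 bT, \<mu> \<star> I (id1 bT)) \<in> alg_obj bT"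
    using cat_iso_by_obj_map[OF eilenberg_moore_iso, of bT "id1 bT"] by simp
  then show "\<mu> \<bullet> WL t \<mu> = \<mu> \<bullet> WR m u" "\<mu> \<bullet> WR \<eta> u = I u"
    unfolding alg_obj_iff by simp_all
qed

lemma free_algebra_ex: "\<exists>f. f \<in> Arr \<and> sr f = tg p \<and> tg f = bT \<and> u \<odot> f = t \<and> WR \<mu> f = m"
proof -
  have "(t, m) \<in> alg_obj (tg p)"
    unfolding alg_obj_iff using mult_assoc mult_unit_left by simp
  then have "\<exists>f\<in>hom1 C (tg p) bT. (u \<odot> f, \<mu> \<star> I f) = (t, m)"
    by (rule cat_iso_by_obj_surj[OF eilenberg_moore_iso, rotated]) simp
  then show ?thesis by auto
qed

context
  fixes f assumes free: "f \<in> Arr" "sr f = tg p" "tg f = bT" "u \<odot> f = t" "WR \<mu> f = m"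
begin

lemma free_forgetful_counit_ex: "\<exists>\<epsilon>. \<epsilon> \<in> Cel \<and> dm \<epsilon> = f \<odot> u \<and> cd \<epsilon> = id1 bT \<and> WL u \<epsilon> = \<mu>"
proof -
  have "u \<odot> f \<odot> u = t \<odot> u"
    using comp_eq_extend[of u f u "id1 (tg p)" t] free by simp
  then have "\<mu> \<in> alg_hom (u \<odot> f \<odot> u, \<mu> \<star> I (f \<odot> u)) (u \<odot> id1 bT, \<mu> \<star> I (id1 bT))"
    unfolding alg_hom_iff using free forgetful_algebra(1) by simp
  moreover have "f \<odot> u \<in> hom1 C bT bT" "id1 bT \<in> hom1 C bT bT"
    using free by simp_all
  ultimately have "\<exists>\<epsilon>\<in>hom2 C (f \<odot> u) (id1 bT). I u \<star> \<epsilon> = \<mu>"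
    using cat_iso_by_hom_surj[OF eilenberg_moore_iso[of bT]] by simp
  then show ?thesis by auto
qed

lemma free_forgetful_adjunction:
  assumes counit: "\<epsilon> \<in> Cel" "dm \<epsilon> = f \<odot> u" "cd \<epsilon> = id1 bT" "WL u \<epsilon> = \<mu>"
  shows "adjunction C f u \<eta> \<epsilon>"
proof -
  have "WL u (WR \<epsilon> f) = m"
    using WR_WL[of u f \<epsilon>] counit free by simp
  moreover have "WL u (WL f \<eta>) = WL t \<eta>"
    using WL_comp[of u f \<eta>] free by simp
  ultimately have "I u \<star> (WR \<epsilon> f \<bullet> WL f \<eta>) = I u \<star> I f"
    using free counit mult_unit_right by simp
  then have "WR \<epsilon> f \<bullet> WL f \<eta> = I f"
    by (rule cat_iso_by_hom_inj[OF eilenberg_moore_iso, of "tg p" f f, rotated 5])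
      (use free counit in simp_all)
  then show ?thesis
    by (intro adjunctionI) (use free counit forgetful_algebra(2) in simp_all)
qed

end

lemma forgetful_has_left_adjoint: "has_left_adjoint C u"
proof -
  obtain f where f: "f \<in> Arr" "sr f = tg p" "tg f = bT" "u \<odot> f = t" "WR \<mu> f = m"
    using free_algebra_ex by blast
  then obtain \<epsilon> where "\<epsilon> \<in> Cel" "dm \<epsilon> = f \<odot> u" "cd \<epsilon> = id1 bT" "WL u \<epsilon> = \<mu>"
    using free_forgetful_counit_ex by blast
  then show ?thesis
    using free_forgetful_adjunction[OF f] unfolding has_left_adjoint_def by blast
qed

end

lemma (in two_category) has_left_adjoint_comp:
  assumes "has_left_adjoint C u" "has_left_adjoint C e" "sr u = tg e"
  shows "has_left_adjoint C (u \<odot> e)"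
proof -
  obtain f \<eta>1 \<epsilon>1 g \<eta>2 \<epsilon>2 where adj: "adjunction C f u \<eta>1 \<epsilon>1" "adjunction C g e \<eta>2 \<epsilon>2"
    using assms(1,2) unfolding has_left_adjoint_def by blast
  moreover have "sr g = tg f"
    using adjunctionD(3,4)[OF adj(1)] adjunctionD(3,4)[OF adj(2)] assms(3) by simp
  ultimately interpret composable_adjunctions C f u \<eta>1 \<epsilon>1 g e \<eta>2 \<epsilon>2
    by unfold_locales
  show ?thesis
    using adjunction_comp unfolding has_left_adjoint_def by blast
qed

lemma (in eilenberg_moore_context) monadic_has_left_adjoint:
  assumes "pT \<in> hom1 C (sr p) bT" "u \<odot> pT = p" "equivalence1 C pT"
  shows "has_left_adjoint C p"
proof -
  have "has_left_adjoint C pT"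
    using equivalence1_has_left_adjoint[OF assms(3)] unfolding has_left_adjoint_def .
  then show ?thesis
    using has_left_adjoint_comp[OF forgetful_has_left_adjoint] assms(1,2) by auto
qed

locale left_adjoint_context = two_category +
  fixes p l \<eta>l \<epsilon>l
  assumes adjunction: "adjunction C l p \<eta>l \<epsilon>l"
begin

lemmas adjunction_cells[simp] = adjunctionD(1-10)[OF adjunction]
lemmas triangles[simp] = adjunctionD(11,12)[OF adjunction]

lemma kan_from_adjunction_inverse1:
  assumes "k \<in> Arr" "sr k = tg p" "tg k = tg p" "\<beta> \<in> Cel" "dm \<beta> = k" "cd \<beta> = p \<odot> l"
  shows "WR (WL p \<epsilon>l \<bullet> WR \<beta> p) l \<bullet> WL k \<eta>l = \<beta>"
proof -
  have exch: "WR (WR \<beta> p) l \<bullet> WL k \<eta>l = WL p (WL l \<eta>l) \<bullet> \<beta>"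
    using WR_WL_exchange[of \<eta>l \<beta>] assms by simp
  have "WL p (WR \<epsilon>l l) \<bullet> WL p (WL l \<eta>l) = WL p (I l)"
    by (rule WL_vcomp_eq[OF triangles(1)]) simp_all
  then have tri: "WL p (WR \<epsilon>l l) \<bullet> WL p (WL l \<eta>l) = I (p \<odot> l)" by simp
  have "WR (WL p \<epsilon>l \<bullet> WR \<beta> p) l \<bullet> WL k \<eta>l = WL p (WR \<epsilon>l l) \<bullet> WR (WR \<beta> p) l \<bullet> WL k \<eta>l"
    using assms by simp
  also have "\<dots> = WL p (WR \<epsilon>l l) \<bullet> WL p (WL l \<eta>l) \<bullet> \<beta>" using exch assms by simp
  also have "\<dots> = \<beta>" using vcomp_eq_extend[OF tri] assms by simp
  finally show ?thesis .
qed

lemma kan_from_adjunction_inverse2: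
  assumes "k \<in> Arr" "sr k = tg p" "tg k = tg p" "\<sigma> \<in> Cel" "dm \<sigma> = k \<odot> p" "cd \<sigma> = p"
  shows "WL p \<epsilon>l \<bullet> WR (WR \<sigma> l \<bullet> WL k \<eta>l) p = \<sigma>"
proof -
  have exch: "WL p \<epsilon>l \<bullet> WR (WR \<sigma> l) p = \<sigma> \<bullet> WL k (WL p \<epsilon>l)"
    using WR_WL_exchange[of \<epsilon>l \<sigma>] assms by simp
  have "WL k (WL p \<epsilon>l) \<bullet> WL k (WR \<eta>l p) = WL k (I p)"
    by (rule WL_vcomp_eq[OF triangles(2)]) (use assms in simp_all)
  then have tri: "WL k (WL p \<epsilon>l) \<bullet> WL k (WR \<eta>l p) = I (k \<odot> p)" using assms by simp
  have "WL p \<epsilon>l \<bullet> WR (WR \<sigma> l \<bullet> WL k \<eta>l) p = WL p \<epsilon>l \<bullet> WR (WR \<sigma> l) p \<bullet> WL k (WR \<eta>l p)"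
    using assms by simp
  also have "\<dots> = \<sigma> \<bullet> WL k (WL p \<epsilon>l) \<bullet> WL k (WR \<eta>l p)" using vcomp_eq_extend[OF exch] assms by simp
  also have "\<dots> = \<sigma>" using tri assms by simp
  finally show ?thesis .
qed

lemma kan_from_adjunction: "right_kan C p p (p \<odot> l) (WL p \<epsilon>l)"
  unfolding right_kan_def
proof (intro conjI ballI)
  fix k assume "k \<in> hom1 C (tg p) (tg p)"
  then have k: "k \<in> Arr" "sr k = tg p" "tg k = tg p" by simp_all
  show "bij_betw (\<lambda>\<beta>. WL p \<epsilon>l \<bullet> (\<beta> \<star> I p)) (hom2 C k (p \<odot> l)) (hom2 C (k \<odot> p) p)"
    by (rule bij_betw_byWitness[where f'="\<lambda>\<sigma>. WR \<sigma> l \<bullet> WL k \<eta>l"])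
      (use k kan_from_adjunction_inverse1 kan_from_adjunction_inverse2 in auto)
qed simp_all

lemma codensity_from_adjunction: "codensity_monad C p (p \<odot> l) (WL p \<epsilon>l) (WL p (WR \<epsilon>l l)) \<eta>l"
  unfolding codensity_monad_def
proof (intro conjI)
  have "\<epsilon>l \<bullet> WL l (WL p \<epsilon>l) = \<epsilon>l \<bullet> WR (WR \<epsilon>l l) p"
    using WR_WL_exchange[of \<epsilon>l \<epsilon>l] by simp
  then have "WL p \<epsilon>l \<bullet> WL p (WL l (WL p \<epsilon>l)) = WL p (\<epsilon>l \<bullet> WR (WR \<epsilon>l l) p)"
    by (rule WL_vcomp_eq) simp_all
  then show "WL p \<epsilon>l \<bullet> (WL p (WR \<epsilon>l l) \<star> I p) = WL p \<epsilon>l \<bullet> (I (p \<odot> l) \<star> WL p \<epsilon>l)"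
    by simp
qed (simp_all add: kan_from_adjunction)

end

section \<open>Descent data versus algebras\<close>

locale descent_codensity_context =
  cokernel_context C p P d0 d1 \<alpha> Q D0 D1 D2 s0 + codensity_context C p t \<gamma> m \<eta>
  for C :: "('o,'a,'c,'z) twocat_data_scheme" (structure) and p P d0 d1 \<alpha> Q D0 D1 D2 s0 t \<gamma> m \<eta>
begin

text \<open>\<open>\<kappa> : P \<rightarrow> b\<close> is the 1-cell classifying the triple \<open>(1, t, \<gamma>)\<close> by the universal property
  of the opcomma object, and \<open>\<kappa>Q : Q \<rightarrow> b\<close> the one induced on the pushout by \<open>(t \<kappa>, \<kappa>)\<close>.
  Whiskering with \<open>\<kappa>\<close> turns descent data into algebras; \<open>\<nu>\<close> and \<open>\<zeta>\<close> translate the cocycle and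
  unit conditions into associativity and unit laws.\<close>

definition "\<kappa> = (SOME h. h \<in> Arr \<and> sr h = P \<and> tg h = B \<and> h \<odot> d0 = id1 B \<and> h \<odot> d1 = t \<and> WL h \<alpha> = \<gamma>)"

lemma \<kappa>_simps[simp]: "\<kappa> \<in> Arr" "sr \<kappa> = P" "tg \<kappa> = B" "\<kappa> \<odot> d0 = id1 B" "\<kappa> \<odot> d1 = t" "WL \<kappa> \<alpha> = \<gamma>"
proof -
  have "\<exists>h. h \<in> Arr \<and> sr h = P \<and> tg h = B \<and> h \<odot> d0 = id1 B \<and> h \<odot> d1 = t \<and> WL h \<alpha> = \<gamma>"
    by (rule opcomma_arr_ex) simp_all
  from someI_ex[OF this, folded \<kappa>_def]
  show "\<kappa> \<in> Arr" "sr \<kappa> = P" "tg \<kappa> = B" "\<kappa> \<odot> d0 = id1 B" "\<kappa> \<odot> d1 = t" "WL \<kappa> \<alpha> = \<gamma>" by simp_all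
qed

lemma \<kappa>_ctx[simp]:
  "X \<in> Arr \<Longrightarrow> tg X = B \<Longrightarrow> \<kappa> \<odot> d0 \<odot> X = X"
  "X \<in> Arr \<Longrightarrow> tg X = B \<Longrightarrow> \<kappa> \<odot> d1 \<odot> X = t \<odot> X"
  "\<xi> \<in> Cel \<Longrightarrow> tg (dm \<xi>) = B \<Longrightarrow> WL \<kappa> (WL d0 \<xi>) = \<xi>"
  "\<xi> \<in> Cel \<Longrightarrow> tg (dm \<xi>) = B \<Longrightarrow> WL \<kappa> (WL d1 \<xi>) = WL t \<xi>"
  using comp_eq_extend[of X d0 \<kappa> "id1 B" "id1 B"] comp_eq_extend[of X d1 \<kappa> "id1 B" t]
    WL_comp[of \<kappa> d0 \<xi>] WL_comp[of \<kappa> d1 \<xi>]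
  by (simp_all del: WL_comp)

definition "\<kappa>Q = (SOME k. k \<in> Arr \<and> sr k = Q \<and> tg k = B \<and> k \<odot> D2 = t \<odot> \<kappa> \<and> k \<odot> D0 = \<kappa>)"

lemma \<kappa>Q_simps[simp]: "\<kappa>Q \<in> Arr" "sr \<kappa>Q = Q" "tg \<kappa>Q = B" "\<kappa>Q \<odot> D2 = t \<odot> \<kappa>" "\<kappa>Q \<odot> D0 = \<kappa>"
proof -
  have "\<exists>k. k \<in> Arr \<and> sr k = Q \<and> tg k = B \<and> k \<odot> D2 = t \<odot> \<kappa> \<and> k \<odot> D0 = \<kappa>"
    by (rule pushout_arr_ex) simp_all
  from someI_ex[OF this, folded \<kappa>Q_def]
  show "\<kappa>Q \<in> Arr" "sr \<kappa>Q = Q" "tg \<kappa>Q = B" "\<kappa>Q \<odot> D2 = t \<odot> \<kappa>" "\<kappa>Q \<odot> D0 = \<kappa>" by simp_all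
qed

lemma \<kappa>Q_ctx[simp]:
  "X \<in> Arr \<Longrightarrow> tg X = P \<Longrightarrow> \<kappa>Q \<odot> D2 \<odot> X = t \<odot> \<kappa> \<odot> X"
  "X \<in> Arr \<Longrightarrow> tg X = P \<Longrightarrow> \<kappa>Q \<odot> D0 \<odot> X = \<kappa> \<odot> X"
  "\<xi> \<in> Cel \<Longrightarrow> tg (dm \<xi>) = P \<Longrightarrow> WL \<kappa>Q (WL D2 \<xi>) = WL t (WL \<kappa> \<xi>)"
  "\<xi> \<in> Cel \<Longrightarrow> tg (dm \<xi>) = P \<Longrightarrow> WL \<kappa>Q (WL D0 \<xi>) = WL \<kappa> \<xi>"
  using comp_eq_extend[of X D2 \<kappa>Q \<kappa> t] comp_eq_extend[of X D0 \<kappa>Q "id1 P" \<kappa>]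
    WL_comp[of \<kappa>Q D2 \<xi>] WL_comp[of \<kappa>Q D0 \<xi>] WL_comp[of t \<kappa> \<xi>]
  by simp_all

definition "\<nu> = (SOME \<xi>. \<xi> \<in> Cel \<and> dm \<xi> = \<kappa>Q \<odot> D1 \<and> cd \<xi> = \<kappa> \<and> WR \<xi> d0 = I (id1 B) \<and> WR \<xi> d1 = m)"

lemma \<nu>_simps[simp]: "\<nu> \<in> Cel" "dm \<nu> = \<kappa>Q \<odot> D1" "cd \<nu> = \<kappa>" "WR \<nu> d0 = I (id1 B)" "WR \<nu> d1 = m"
proof -
  have "\<exists>\<xi>. \<xi> \<in> Cel \<and> dm \<xi> = \<kappa>Q \<odot> D1 \<and> cd \<xi> = \<kappa> \<and> WR \<xi> d0 = I (id1 B) \<and> WR \<xi> d1 = m"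
    by (rule opcomma_cell_ex[where y=B]) (use mult_char in simp_all)
  from someI_ex[OF this, folded \<nu>_def]
  show "\<nu> \<in> Cel" "dm \<nu> = \<kappa>Q \<odot> D1" "cd \<nu> = \<kappa>" "WR \<nu> d0 = I (id1 B)" "WR \<nu> d1 = m" by simp_all
qed

definition "\<zeta> = (SOME \<xi>. \<xi> \<in> Cel \<and> dm \<xi> = s0 \<and> cd \<xi> = \<kappa> \<and> WR \<xi> d0 = I (id1 B) \<and> WR \<xi> d1 = \<eta>)"

lemma \<zeta>_simps[simp]: "\<zeta> \<in> Cel" "dm \<zeta> = s0" "cd \<zeta> = \<kappa>" "WR \<zeta> d0 = I (id1 B)" "WR \<zeta> d1 = \<eta>"
proof -
  have "\<exists>\<xi>. \<xi> \<in> Cel \<and> dm \<xi> = s0 \<and> cd \<xi> = \<kappa> \<and> WR \<xi> d0 = I (id1 B) \<and> WR \<xi> d1 = \<eta>"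
    by (rule opcomma_cell_ex[where y=B]) simp_all
  from someI_ex[OF this, folded \<zeta>_def]
  show "\<zeta> \<in> Cel" "dm \<zeta> = s0" "cd \<zeta> = \<kappa>" "WR \<zeta> d0 = I (id1 B)" "WR \<zeta> d1 = \<eta>" by simp_all
qed

context
  fixes \<beta> X Y
  assumes \<beta>: "\<beta> \<in> Cel" "X \<in> Arr" "Y \<in> Arr" "tg X = B" "tg Y = B" "dm \<beta> = d1 \<odot> X" "cd \<beta> = d0 \<odot> Y"
begin

lemma \<kappa>Q_D1_whisker: "WL \<kappa>Q (WL D1 \<beta>) = WL \<kappa> \<beta> \<bullet> WR m X"
  using WR_WL_exchange[of \<beta> \<nu>] \<beta> by simp

lemma s0_whisker: "WL s0 \<beta> = WL \<kappa> \<beta> \<bullet> WR \<eta> X"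
  using WR_WL_exchange[of \<beta> \<zeta>] \<beta> by simp

end

definition "desc_obj y = {(h, \<beta>). h \<in> hom1 C y B \<and> \<beta> \<in> hom2 C (d1 \<odot> h) (d0 \<odot> h) \<and>
    (I D0 \<star> \<beta>) \<bullet> (I D2 \<star> \<beta>) = I D1 \<star> \<beta> \<and> I s0 \<star> \<beta> = I h}"

definition "desc_hom = (\<lambda>(h, \<beta>) (h', \<beta>'). {\<xi>. \<xi> \<in> hom2 C h h' \<and> \<beta>' \<bullet> (I d1 \<star> \<xi>) = (I d0 \<star> \<xi>) \<bullet> \<beta>})"

lemma desc_obj_iff:
  "(h, \<beta>) \<in> desc_obj y \<longleftrightarrow> h \<in> Arr \<and> sr h = y \<and> tg h = B \<and> \<beta> \<in> Cel \<and> dm \<beta> = d1 \<odot> h \<and> cd \<beta> = d0 \<odot> h \<and>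
     WL D0 \<beta> \<bullet> WL D2 \<beta> = WL D1 \<beta> \<and> WL s0 \<beta> = I h"
  unfolding desc_obj_def by (simp only: mem_Collect_eq case_prod_conv hom1_iff hom2_iff fold_WL conj_assoc)

lemma desc_hom_iff:
  "\<xi> \<in> desc_hom (h, \<beta>) (h', \<beta>') \<longleftrightarrow> \<xi> \<in> Cel \<and> dm \<xi> = h \<and> cd \<xi> = h' \<and> \<beta>' \<bullet> WL d1 \<xi> = WL d0 \<xi> \<bullet> \<beta>"
  unfolding desc_hom_def by (simp only: mem_Collect_eq case_prod_conv hom2_iff fold_WL conj_assoc)

lemma lax_descent_object_iff:
  "lax_descent_object C p d0 d1 D0 D1 D2 s0 L d \<Psi> \<longleftrightarrow>
     L \<in> Obs \<and> d \<in> hom1 C L B \<and> \<Psi> \<in> hom2 C (d1 \<odot> d) (d0 \<odot> d) \<and>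
     (\<forall>y\<in>Obs. cat_iso_by (hom1 C y L) (hom2 C) (desc_obj y) desc_hom
        (\<lambda>g. (d \<odot> g, \<Psi> \<star> I g)) (\<lambda>\<xi>. I d \<star> \<xi>))"
  unfolding lax_descent_object_def desc_obj_def desc_hom_def by (rule refl)

definition "alg_of_desc = (\<lambda>(h, \<beta>). (h, WL \<kappa> \<beta>))"

lemma alg_of_desc_mem:
  assumes "(h, \<beta>) \<in> desc_obj y"
  shows "alg_of_desc (h, \<beta>) \<in> alg_obj y"
proof -
  have \<beta>: "h \<in> Arr" "sr h = y" "tg h = B" "\<beta> \<in> Cel" "dm \<beta> = d1 \<odot> h" "cd \<beta> = d0 \<odot> h"
    and cocycle: "WL D0 \<beta> \<bullet> WL D2 \<beta> = WL D1 \<beta>" and unit: "WL s0 \<beta> = I h"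
    using assms unfolding desc_obj_iff by blast+
  have "WL \<kappa>Q (WL D0 \<beta>) \<bullet> WL \<kappa>Q (WL D2 \<beta>) = WL \<kappa>Q (WL D1 \<beta>)"
    using WL_vcomp_eq[OF cocycle, of \<kappa>Q] \<beta> by simp
  then have "WL \<kappa> \<beta> \<bullet> WL t (WL \<kappa> \<beta>) = WL \<kappa> \<beta> \<bullet> WR m h"
    using \<kappa>Q_D1_whisker[of \<beta> h h] \<beta> by simp
  moreover have "WL \<kappa> \<beta> \<bullet> WR \<eta> h = I h"
    using s0_whisker[of \<beta> h h] \<beta> unit by simp
  ultimately show ?thesis
    unfolding alg_of_desc_def alg_obj_iff prod.case using \<beta> by simp
qed

end

locale comparison_context =
  descent_codensity_context C p P d0 d1 \<alpha> Q D0 D1 D2 s0 t \<gamma> m \<eta> + left_adjoint_context C p l \<eta>l \<epsilon>l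
  for C :: "('o,'a,'c,'z) twocat_data_scheme" (structure) and p P d0 d1 \<alpha> Q D0 D1 D2 s0 t \<gamma> m \<eta> l \<eta>l \<epsilon>l
begin

text \<open>In the presence of the left adjoint \<open>l\<close>, the 2-cell \<open>\<omega> : 1 \<Rightarrow> d0 \<kappa>\<close> on \<open>P\<close> (built from the
  comparison \<open>\<theta> : p l \<Rightarrow> t\<close> and the unit) shows that a 2-cell into \<open>d0 Y\<close> is determined by its
  whiskering with \<open>\<kappa>\<close>; \<open>\<Omega>\<close> does the same on \<open>Q\<close>. This makes whiskering with \<open>\<kappa>\<close> invertible.\<close>

definition "\<theta> = (SOME \<beta>. \<beta> \<in> Cel \<and> dm \<beta> = p \<odot> l \<and> cd \<beta> = t \<and> \<gamma> \<bullet> WR \<beta> p = WL p \<epsilon>l)"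

lemma \<theta>_simps[simp]: "\<theta> \<in> Cel" "dm \<theta> = p \<odot> l" "cd \<theta> = t" and \<theta>_eq: "\<gamma> \<bullet> WR \<theta> p = WL p \<epsilon>l"
proof -
  have "\<exists>\<beta>. \<beta> \<in> Cel \<and> dm \<beta> = p \<odot> l \<and> cd \<beta> = t \<and> \<gamma> \<bullet> WR \<beta> p = WL p \<epsilon>l"
    by (rule kan_ex) simp_all
  from someI_ex[OF this, folded \<theta>_def]
  show "\<theta> \<in> Cel" "dm \<theta> = p \<odot> l" "cd \<theta> = t" "\<gamma> \<bullet> WR \<theta> p = WL p \<epsilon>l" by simp_all
qed

definition "\<rho> = WL d0 \<theta> \<bullet> WR \<alpha> l \<bullet> WL d1 \<eta>l"

lemma \<rho>_simps[simp]: "\<rho> \<in> Cel" "dm \<rho> = d1" "cd \<rho> = d0 \<odot> t"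
  unfolding \<rho>_def by simp_all

lemma \<rho>_eq: "WL d0 \<gamma> \<bullet> WR \<rho> p = \<alpha>"
proof -
  have exch: "\<alpha> \<bullet> WL d1 (WL p \<epsilon>l) = WL d0 (WL p \<epsilon>l) \<bullet> WR (WR \<alpha> l) p"
    using WR_WL_exchange[of \<epsilon>l \<alpha>] by simp
  have \<theta>': "WL d0 \<gamma> \<bullet> WL d0 (WR \<theta> p) = WL d0 (WL p \<epsilon>l)"
    by (rule WL_vcomp_eq[OF \<theta>_eq]) simp_all
  have "WL d1 (WL p \<epsilon>l) \<bullet> WL d1 (WR \<eta>l p) = WL d1 (I p)"
    by (rule WL_vcomp_eq[OF triangles(2)]) simp_all
  then have tri: "WL d1 (WL p \<epsilon>l) \<bullet> WL d1 (WR \<eta>l p) = I (d1 \<odot> p)" by simp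
  have "WL d0 \<gamma> \<bullet> WR \<rho> p = WL d0 \<gamma> \<bullet> WL d0 (WR \<theta> p) \<bullet> WR (WR \<alpha> l) p \<bullet> WL d1 (WR \<eta>l p)"
    unfolding \<rho>_def by simp
  also have "\<dots> = WL d0 (WL p \<epsilon>l) \<bullet> WR (WR \<alpha> l) p \<bullet> WL d1 (WR \<eta>l p)"
    using vcomp_eq_extend[OF \<theta>'] by simp
  also have "\<dots> = \<alpha> \<bullet> WL d1 (WL p \<epsilon>l) \<bullet> WL d1 (WR \<eta>l p)"
    using vcomp_eq_extend[OF exch[symmetric]] by simp
  also have "\<dots> = \<alpha>" using tri by simp
  finally show ?thesis .
qed

lemma \<kappa>_\<rho>[simp]: "WL \<kappa> \<rho> = I t"
proof (rule kan_uniq[of t])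
  have "WL \<kappa> (WL d0 \<gamma>) \<bullet> WL \<kappa> (WR \<rho> p) = WL \<kappa> \<alpha>"
    by (rule WL_vcomp_eq[OF \<rho>_eq]) simp_all
  then show "\<gamma> \<bullet> WR (WL \<kappa> \<rho>) p = \<gamma> \<bullet> WR (I t) p" by simp
qed simp_all

lemma \<kappa>_\<rho>_ctx[simp]: "X \<in> Arr \<Longrightarrow> tg X = B \<Longrightarrow> WL \<kappa> (WR \<rho> X) = I (t \<odot> X)"
  using WR_WL[of \<kappa> X \<rho>] by simp

definition "\<omega> = (SOME \<xi>. \<xi> \<in> Cel \<and> dm \<xi> = id1 P \<and> cd \<xi> = d0 \<odot> \<kappa> \<and> WR \<xi> d0 = I d0 \<and> WR \<xi> d1 = \<rho>)"

lemma \<omega>_simps[simp]: "\<omega> \<in> Cel" "dm \<omega> = id1 P" "cd \<omega> = d0 \<odot> \<kappa>" "WR \<omega> d0 = I d0" "WR \<omega> d1 = \<rho>"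
proof -
  have "\<exists>\<xi>. \<xi> \<in> Cel \<and> dm \<xi> = id1 P \<and> cd \<xi> = d0 \<odot> \<kappa> \<and> WR \<xi> d0 = I d0 \<and> WR \<xi> d1 = \<rho>"
    by (rule opcomma_cell_ex[where y=P]) (use \<rho>_eq in simp_all)
  from someI_ex[OF this, folded \<omega>_def]
  show "\<omega> \<in> Cel" "dm \<omega> = id1 P" "cd \<omega> = d0 \<odot> \<kappa>" "WR \<omega> d0 = I d0" "WR \<omega> d1 = \<rho>" by simp_all
qed

lemma cell_into_d0_factor:
  assumes "\<sigma> \<in> Cel" "Y \<in> Arr" "tg Y = B" "cd \<sigma> = d0 \<odot> Y"
  shows "\<sigma> = WL d0 (WL \<kappa> \<sigma>) \<bullet> WR \<omega> (dm \<sigma>)"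
proof -
  have "tg (dm \<sigma>) = P" using assms cell_dom_cod(4)[OF assms(1)] by simp
  then show ?thesis using WR_WL_exchange[of \<sigma> \<omega>] assms by simp
qed

lemma cell_into_d0_eqI:
  assumes "\<sigma> \<in> Cel" "\<sigma>' \<in> Cel" "Y \<in> Arr" "tg Y = B" "cd \<sigma> = d0 \<odot> Y" "cd \<sigma>' = d0 \<odot> Y"
    "dm \<sigma> = dm \<sigma>'" "WL \<kappa> \<sigma> = WL \<kappa> \<sigma>'"
  shows "\<sigma> = \<sigma>'"
  using cell_into_d0_factor[OF assms(1,3,4,5)] cell_into_d0_factor[OF assms(2,3,4,6)] assms(7,8) by simp

definition "\<Omega>2 = (SOME \<xi>. \<xi> \<in> Cel \<and> dm \<xi> = D2 \<and> cd \<xi> = D0 \<odot> d0 \<odot> t \<odot> \<kappa> \<and> WR \<xi> d0 = WL D0 \<rho>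
    \<and> WR \<xi> d1 = WL D0 (WR \<rho> t) \<bullet> WL D2 \<rho>)"

lemma \<Omega>2_simps[simp]: "\<Omega>2 \<in> Cel" "dm \<Omega>2 = D2" "cd \<Omega>2 = D0 \<odot> d0 \<odot> t \<odot> \<kappa>" "WR \<Omega>2 d0 = WL D0 \<rho>"
  "WR \<Omega>2 d1 = WL D0 (WR \<rho> t) \<bullet> WL D2 \<rho>"
proof -
  have "WL d0 (WL t \<gamma>) \<bullet> WR (WR \<rho> t) p = WR \<rho> p \<bullet> WL d1 \<gamma>"
    using WR_WL_exchange[of \<gamma> \<rho>] by simp
  then have "WL D0 (WL d0 (WL t \<gamma>) \<bullet> WR (WR \<rho> t) p) = WL D0 (WR \<rho> p \<bullet> WL d1 \<gamma>)" by simp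
  then have exch: "WL D0 (WL d0 (WL t \<gamma>)) \<bullet> WL D0 (WR (WR \<rho> t) p) = WL D0 (WR \<rho> p) \<bullet> WL D2 (WL d0 \<gamma>)"
    by simp
  have \<rho>': "WL D2 (WL d0 \<gamma>) \<bullet> WL D2 (WR \<rho> p) = WL D2 \<alpha>"
    by (rule WL_vcomp_eq[OF \<rho>_eq]) simp_all
  have "\<exists>\<xi>. \<xi> \<in> Cel \<and> dm \<xi> = D2 \<and> cd \<xi> = D0 \<odot> d0 \<odot> t \<odot> \<kappa> \<and> WR \<xi> d0 = WL D0 \<rho>
      \<and> WR \<xi> d1 = WL D0 (WR \<rho> t) \<bullet> WL D2 \<rho>"
    by (rule opcomma_cell_ex[where y=Q]) (use vcomp_eq_extend[OF exch] \<rho>' in simp_all)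
  from someI_ex[OF this, folded \<Omega>2_def]
  show "\<Omega>2 \<in> Cel" "dm \<Omega>2 = D2" "cd \<Omega>2 = D0 \<odot> d0 \<odot> t \<odot> \<kappa>" "WR \<Omega>2 d0 = WL D0 \<rho>"
    "WR \<Omega>2 d1 = WL D0 (WR \<rho> t) \<bullet> WL D2 \<rho>" by simp_all
qed

definition "\<Omega> = (SOME \<xi>. \<xi> \<in> Cel \<and> dm \<xi> = id1 Q \<and> cd \<xi> = D0 \<odot> d0 \<odot> \<kappa>Q \<and> WR \<xi> D2 = \<Omega>2 \<and> WR \<xi> D0 = WL D0 \<omega>)"

lemma \<Omega>_simps[simp]: "\<Omega> \<in> Cel" "dm \<Omega> = id1 Q" "cd \<Omega> = D0 \<odot> d0 \<odot> \<kappa>Q" "WR \<Omega> D2 = \<Omega>2" "WR \<Omega> D0 = WL D0 \<omega>"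
proof -
  have "\<exists>\<xi>. \<xi> \<in> Cel \<and> dm \<xi> = id1 Q \<and> cd \<xi> = D0 \<odot> d0 \<odot> \<kappa>Q \<and> WR \<xi> D2 = \<Omega>2 \<and> WR \<xi> D0 = WL D0 \<omega>"
    by (rule pushout_cell_ex[where y=Q]) simp_all
  from someI_ex[OF this, folded \<Omega>_def]
  show "\<Omega> \<in> Cel" "dm \<Omega> = id1 Q" "cd \<Omega> = D0 \<odot> d0 \<odot> \<kappa>Q" "WR \<Omega> D2 = \<Omega>2" "WR \<Omega> D0 = WL D0 \<omega>"
    by simp_all
qed

lemma cell_into_D0d0_factor:
  assumes "\<sigma> \<in> Cel" "Y \<in> Arr" "tg Y = B" "cd \<sigma> = D0 \<odot> d0 \<odot> Y"
  shows "\<sigma> = WL D0 (WL d0 (WL \<kappa>Q \<sigma>)) \<bullet> WR \<Omega> (dm \<sigma>)"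
proof -
  have "tg (dm \<sigma>) = Q" using assms cell_dom_cod(4)[OF assms(1)] by simp
  then show ?thesis using WR_WL_exchange[of \<sigma> \<Omega>] assms by simp
qed

lemma cell_into_D0d0_eqI:
  assumes "\<sigma> \<in> Cel" "\<sigma>' \<in> Cel" "Y \<in> Arr" "tg Y = B" "cd \<sigma> = D0 \<odot> d0 \<odot> Y" "cd \<sigma>' = D0 \<odot> d0 \<odot> Y"
    "dm \<sigma> = dm \<sigma>'" "WL \<kappa>Q \<sigma> = WL \<kappa>Q \<sigma>'"
  shows "\<sigma> = \<sigma>'"
  using cell_into_D0d0_factor[OF assms(1,3,4,5)] cell_into_D0d0_factor[OF assms(2,3,4,6)] assms(7,8) by simp

definition "desc_of_alg = (\<lambda>(h, a). (h, WL d0 a \<bullet> WR \<rho> h))"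

lemma desc_of_alg_mem:
  assumes "(h, a) \<in> alg_obj y"
  shows "desc_of_alg (h, a) \<in> desc_obj y"
proof -
  have a: "h \<in> Arr" "sr h = y" "tg h = B" "a \<in> Cel" "dm a = t \<odot> h" "cd a = h"
    and assoc: "a \<bullet> WL t a = a \<bullet> WR m h" and unit: "a \<bullet> WR \<eta> h = I h"
    using assms unfolding alg_obj_iff by blast+
  define \<beta> where "\<beta> = WL d0 a \<bullet> WR \<rho> h"
  have \<beta>: "\<beta> \<in> Cel" "dm \<beta> = d1 \<odot> h" "cd \<beta> = d0 \<odot> h" "WL \<kappa> \<beta> = a"
    unfolding \<beta>_def using a by simp_all
  have "WL D0 \<beta> \<bullet> WL D2 \<beta> = WL D1 \<beta>"
  proof (rule cell_into_D0d0_eqI[where Y=h])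
    show "WL \<kappa>Q (WL D0 \<beta> \<bullet> WL D2 \<beta>) = WL \<kappa>Q (WL D1 \<beta>)"
      using \<kappa>Q_D1_whisker[of \<beta> h h] \<beta> a assoc by simp
  qed (use \<beta> a in simp_all)
  moreover have "WL s0 \<beta> = I h"
    using s0_whisker[of \<beta> h h] \<beta> a unit by simp
  ultimately show ?thesis
    unfolding desc_of_alg_def prod.case desc_obj_iff \<beta>_def[symmetric] using a \<beta> by simp
qed

lemma alg_of_desc_of_alg: "(h, a) \<in> alg_obj y \<Longrightarrow> alg_of_desc (desc_of_alg (h, a)) = (h, a)"
  unfolding alg_obj_iff alg_of_desc_def desc_of_alg_def by simp

lemma desc_of_alg_of_desc: "(h, \<beta>) \<in> desc_obj y \<Longrightarrow> desc_of_alg (alg_of_desc (h, \<beta>)) = (h, \<beta>)"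
  unfolding desc_obj_iff alg_of_desc_def desc_of_alg_def using cell_into_d0_factor[of \<beta> h] by simp

lemma desc_hom_eq_alg_hom:
  assumes "(h, \<beta>) \<in> desc_obj y" "(h', \<beta>') \<in> desc_obj y"
  shows "desc_hom (h, \<beta>) (h', \<beta>') = alg_hom (alg_of_desc (h, \<beta>)) (alg_of_desc (h', \<beta>'))"
proof -
  have \<beta>: "h \<in> Arr" "tg h = B" "\<beta> \<in> Cel" "dm \<beta> = d1 \<odot> h" "cd \<beta> = d0 \<odot> h"
    "h' \<in> Arr" "tg h' = B" "\<beta>' \<in> Cel" "dm \<beta>' = d1 \<odot> h'" "cd \<beta>' = d0 \<odot> h'"
    using assms unfolding desc_obj_iff by blast+
  have compatible_iff: "\<beta>' \<bullet> WL d1 \<xi> = WL d0 \<xi> \<bullet> \<beta> \<longleftrightarrow> \<xi> \<bullet> WL \<kappa> \<beta> = WL \<kappa> \<beta>' \<bullet> WL t \<xi>"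
    if \<xi>: "\<xi> \<in> Cel" "dm \<xi> = h" "cd \<xi> = h'" for \<xi>
  proof
    assume "\<beta>' \<bullet> WL d1 \<xi> = WL d0 \<xi> \<bullet> \<beta>"
    then have "WL \<kappa> (\<beta>' \<bullet> WL d1 \<xi>) = WL \<kappa> (WL d0 \<xi> \<bullet> \<beta>)" by simp
    then show "\<xi> \<bullet> WL \<kappa> \<beta> = WL \<kappa> \<beta>' \<bullet> WL t \<xi>" using \<xi> \<beta> by simp
  next
    assume alg: "\<xi> \<bullet> WL \<kappa> \<beta> = WL \<kappa> \<beta>' \<bullet> WL t \<xi>"
    show "\<beta>' \<bullet> WL d1 \<xi> = WL d0 \<xi> \<bullet> \<beta>"
      by (rule cell_into_d0_eqI[where Y=h']) (use \<xi> \<beta> alg in simp_all)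
  qed
  show ?thesis
  proof (rule set_eqI)
    fix \<xi>
    show "\<xi> \<in> desc_hom (h, \<beta>) (h', \<beta>') \<longleftrightarrow> \<xi> \<in> alg_hom (alg_of_desc (h, \<beta>)) (alg_of_desc (h', \<beta>'))"
      unfolding alg_of_desc_def prod.case desc_hom_iff alg_hom_iff using compatible_iff by blast
  qed
qed

lemma desc_alg_iso: "cat_iso_by (desc_obj y) desc_hom (alg_obj y) alg_hom alg_of_desc id"
  unfolding cat_iso_by_def
proof (intro conjI ballI)
  show "bij_betw alg_of_desc (desc_obj y) (alg_obj y)"
    by (rule bij_betw_byWitness[where f'=desc_of_alg])
      (use alg_of_desc_mem desc_of_alg_mem alg_of_desc_of_alg desc_of_alg_of_desc in auto)
  fix a b assume "a \<in> desc_obj y" "b \<in> desc_obj y"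
  then show "bij_betw id (desc_hom a b) (alg_hom (alg_of_desc a) (alg_of_desc b))"
    using desc_hom_eq_alg_hom by (cases a, cases b) (simp add: bij_betw_id)
qed

lemma alg_desc_iso: "cat_iso_by (alg_obj y) alg_hom (desc_obj y) desc_hom desc_of_alg id"
  unfolding cat_iso_by_def
proof (intro conjI ballI)
  show "bij_betw desc_of_alg (alg_obj y) (desc_obj y)"
    by (rule bij_betw_byWitness[where f'=alg_of_desc])
      (use alg_of_desc_mem desc_of_alg_mem alg_of_desc_of_alg desc_of_alg_of_desc in auto)
  fix a b assume ab: "a \<in> alg_obj y" "b \<in> alg_obj y"
  then have "desc_hom (desc_of_alg a) (desc_of_alg b) = alg_hom a b"
    using desc_hom_eq_alg_hom[of _ _ y] desc_of_alg_mem alg_of_desc_of_alg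
    by (cases a, cases b) (metis (no_types, lifting) prod.collapse)
  then show "bij_betw id (alg_hom a b) (desc_hom (desc_of_alg a) (desc_of_alg b))"
    by (simp add: bij_betw_id)
qed

end

context comparison_context
begin

lemma eilenberg_moore_of_lax_descent:
  assumes "lax_descent_object C p d0 d1 D0 D1 D2 s0 L d \<Psi>"
  shows "eilenberg_moore C B t m \<eta> L d (WL \<kappa> \<Psi>)"
proof -
  have d: "L \<in> Obs" "d \<in> Arr" "sr d = L" "tg d = B" "\<Psi> \<in> Cel" "dm \<Psi> = d1 \<odot> d" "cd \<Psi> = d0 \<odot> d"
    using assms unfolding lax_descent_object_iff by auto
  have iso: "\<And>y. y \<in> Obs \<Longrightarrow> cat_iso_by (hom1 C y L) (hom2 C) (desc_obj y) desc_hom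
       (\<lambda>g. (d \<odot> g, \<Psi> \<star> I g)) (\<lambda>\<xi>. I d \<star> \<xi>)"
    using assms unfolding lax_descent_object_iff by blast
  show ?thesis
    unfolding eilenberg_moore_iff
  proof (intro conjI ballI)
    fix y assume "y \<in> Obs"
    show "cat_iso_by (hom1 C y L) (hom2 C) (alg_obj y) alg_hom
        (\<lambda>g. (d \<odot> g, WL \<kappa> \<Psi> \<star> I g)) (\<lambda>\<xi>. I d \<star> \<xi>)"
      by (rule cat_iso_by_comp[OF iso[OF \<open>y \<in> Obs\<close>] desc_alg_iso])
        (use d in \<open>auto simp: alg_of_desc_def\<close>)
  qed (use d in simp_all)
qed

lemma lax_descent_of_eilenberg_moore:
  assumes "eilenberg_moore C B t m \<eta> bT u \<mu>"
  shows "lax_descent_object C p d0 d1 D0 D1 D2 s0 bT u (WL d0 \<mu> \<bullet> WR \<rho> u)"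
proof -
  have u: "bT \<in> Obs" "u \<in> Arr" "sr u = bT" "tg u = B" "\<mu> \<in> Cel" "dm \<mu> = t \<odot> u" "cd \<mu> = u"
    using assms unfolding eilenberg_moore_iff by auto
  have iso: "\<And>y. y \<in> Obs \<Longrightarrow> cat_iso_by (hom1 C y bT) (hom2 C) (alg_obj y) alg_hom
       (\<lambda>g. (u \<odot> g, \<mu> \<star> I g)) (\<lambda>\<xi>. I u \<star> \<xi>)"
    using assms unfolding eilenberg_moore_iff by blast
  show ?thesis
    unfolding lax_descent_object_iff
  proof (intro conjI ballI)
    fix y assume "y \<in> Obs"
    show "cat_iso_by (hom1 C y bT) (hom2 C) (desc_obj y) desc_hom
        (\<lambda>g. (u \<odot> g, (WL d0 \<mu> \<bullet> WR \<rho> u) \<star> I g)) (\<lambda>\<xi>. I u \<star> \<xi>)"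
      by (rule cat_iso_by_comp[OF iso[OF \<open>y \<in> Obs\<close>] alg_desc_iso])
        (use u in \<open>auto simp: desc_of_alg_def\<close>)
  qed (use u in simp_all)
qed

lemma monadic_of_lax_descent:
  assumes "lax_descent_object C p d0 d1 D0 D1 D2 s0 L d \<Psi>"
    and "pH \<in> hom1 C E L" "d \<odot> pH = p" "WR \<Psi> pH = \<alpha>" "equivalence1 C pH"
  shows "monadic C p"
proof -
  have "d \<in> Arr" "sr d = L" "tg d = B" "\<Psi> \<in> Cel" "dm \<Psi> = d1 \<odot> d"
    using assms(1) unfolding lax_descent_object_iff by auto
  then have "WL \<kappa> \<Psi> \<star> I pH = \<gamma>"
    using WR_WL[of \<kappa> pH \<Psi>] assms(2,4) by simp
  then show ?thesis
    unfolding monadic_def using codensity eilenberg_moore_of_lax_descent[OF assms(1)] assms(2,3,5)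
    by (intro conjI exI[of _ t] exI[of _ \<gamma>] exI[of _ m] exI[of _ \<eta>] exI[of _ L] exI[of _ d]
        exI[of _ "WL \<kappa> \<Psi>"] exI[of _ pH]) simp_all
qed

lemma effective_faithful_of_eilenberg_moore:
  assumes "eilenberg_moore C B t m \<eta> bT u \<mu>"
    and "pT \<in> hom1 C E bT" "u \<odot> pT = p" "WR \<mu> pT = \<gamma>" "equivalence1 C pT"
  shows "effective_faithful C p"
proof -
  have u: "u \<in> Arr" "sr u = bT" "tg u = B" "\<mu> \<in> Cel" "dm \<mu> = t \<odot> u" "cd \<mu> = u"
    using assms(1) unfolding eilenberg_moore_iff by auto
  have "WR \<rho> (u \<odot> pT) = WR (WR \<rho> u) pT"
    using WR_comp[of u pT \<rho>] u assms(2) by simp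
  then have "(WL d0 \<mu> \<bullet> WR \<rho> u) \<star> I pT = WL d0 (WR \<mu> pT) \<bullet> WR \<rho> p"
    using u assms(2,3) by simp
  then have "(WL d0 \<mu> \<bullet> WR \<rho> u) \<star> I pT = \<alpha>"
    using \<rho>_eq assms(4) by simp
  then show ?thesis
    unfolding effective_faithful_def
    using cokernel lax_descent_of_eilenberg_moore[OF assms(1)] assms(2,3,5) by blast
qed

end

lemma (in two_category) monadic_imp_left_adjoint_effective_faithful:
  assumes "has_cokernel_diagram C p" "monadic C p"
  shows "has_left_adjoint C p \<and> effective_faithful C p"
proof -
  obtain t \<gamma> m \<eta> bT u \<mu> pT where monad: "codensity_monad C p t \<gamma> m \<eta>"
    and em: "eilenberg_moore C (tg p) t m \<eta> bT u \<mu>"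
    and pT: "pT \<in> hom1 C (sr p) bT" "u \<odot> pT = p" "WR \<mu> pT = \<gamma>" "equivalence1 C pT"
    using assms(2) unfolding monadic_def by auto
  interpret eilenberg_moore_context C p t \<gamma> m \<eta> bT u \<mu>
    using monad em by unfold_locales
  have left: "has_left_adjoint C p"
    using monadic_has_left_adjoint[OF pT(1,2,4)] .
  then obtain l \<eta>l \<epsilon>l where "adjunction C l p \<eta>l \<epsilon>l"
    unfolding has_left_adjoint_def by blast
  moreover obtain P d0 d1 \<alpha> Q D0 D1 D2 s0 where "cokernel_diagram C p P d0 d1 \<alpha> Q D0 D1 D2 s0"
    using assms(1) unfolding has_cokernel_diagram_def by blast
  ultimately interpret comparison_context C p P d0 d1 \<alpha> Q D0 D1 D2 s0 t \<gamma> m \<eta> l \<eta>l \<epsilon>l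
    using monad by unfold_locales
  show ?thesis
    using left effective_faithful_of_eilenberg_moore[OF em pT] by blast
qed

lemma (in two_category) left_adjoint_effective_faithful_imp_monadic:
  assumes "has_left_adjoint C p" "effective_faithful C p"
  shows "monadic C p"
proof -
  obtain l \<eta>l \<epsilon>l P d0 d1 \<alpha> Q D0 D1 D2 s0 L d \<Psi> pH where
    adj: "adjunction C l p \<eta>l \<epsilon>l" and
    cokernel: "cokernel_diagram C p P d0 d1 \<alpha> Q D0 D1 D2 s0" and
    descent: "lax_descent_object C p d0 d1 D0 D1 D2 s0 L d \<Psi>" and
    pH: "pH \<in> hom1 C (sr p) L" "d \<odot> pH = p" "WR \<Psi> pH = \<alpha>" "equivalence1 C pH"
    using assms unfolding has_left_adjoint_def effective_faithful_def by auto
  interpret left_adjoint_context C p l \<eta>l \<epsilon>l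
    using adj by unfold_locales
  interpret comparison_context C p P d0 d1 \<alpha> Q D0 D1 D2 s0 "p \<odot> l" "WL p \<epsilon>l" "WL p (WR \<epsilon>l l)" \<eta>l
    l \<eta>l \<epsilon>l
    using cokernel codensity_from_adjunction adj by unfold_locales
  show ?thesis
    using monadic_of_lax_descent[OF descent pH] .
qed

section \<open>Duality\<close>

lemma co_simps[simp]:
  "Ob (co C) = Ob C" "Ar (co C) = Ar C" "Ce (co C) = Ce C" "src1 (co C) = src1 C"
  "trg1 (co C) = trg1 C" "dom2 (co C) = cod2 C" "cod2 (co C) = dom2 C" "cmp (co C) = cmp C"
  "ide1 (co C) = ide1 C" "vc (co C) \<xi> \<eta> = vc C \<eta> \<xi>" "hc (co C) = hc C" "id2 (co C) = id2 C"
  by (simp_all add: co_def)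

lemma co_co[simp]: "co (co C) = C"
  by (simp add: co_def)

lemma hom1_co[simp]: "hom1 (co C) = hom1 C"
  by (simp add: hom1_def fun_eq_iff)

lemma hom2_co: "hom2 (co C) = (\<lambda>f g. hom2 C g f)"
  by (auto simp add: hom2_def fun_eq_iff)

lemma (in two_category) twocat_co: "twocat (co C)"
  unfolding twocat_def co_simps hom1_co hom2_co
  by (intro conjI ballI allI impI; simp del: fold_WL fold_WR add: hcomp_assoc interchange)

lemma swap_mem_image: "(a, b) \<in> prod.swap ` S \<longleftrightarrow> (b, a) \<in> S"
  by force

lemma pushout2_co:
  assumes "pushout2 C f0 f1 P q0 q1"
  shows "pushout2 (co C) f1 f0 P q1 q0"
  using assms unfolding pushout2_def co_simps hom1_co hom2_co
  apply (elim conjE, intro conjI ballI)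
  apply (simp_all only: simp_thms)
  apply (rule cat_iso_by_op[where \<sigma>=prod.swap and \<tau>=prod.swap], erule bspec, assumption)
  apply (auto intro!: bij_betw_byWitness[where f'=prod.swap] simp: swap_mem_image)
  done

lemma opcomma_co:
  assumes "opcomma C p P d0 d1 \<alpha>"
  shows "opcomma (co C) p P d1 d0 \<alpha>"
  using assms unfolding opcomma_def co_simps hom1_co hom2_co
  apply (elim conjE, intro conjI ballI)
  apply (simp_all only: simp_thms)
  apply (rule cat_iso_by_op[where \<sigma>="\<lambda>(h0, h1, \<beta>). (h1, h0, \<beta>)" and \<tau>=prod.swap], erule bspec, assumption)
  apply (auto intro!: bij_betw_byWitness[where f'="\<lambda>(h0, h1, \<beta>). (h1, h0, \<beta>)"] simp: swap_mem_image)
  done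

lemma lax_descent_object_co:
  assumes "lax_descent_object C p d0 d1 D0 D1 D2 s0 L d \<Psi>"
  shows "lax_descent_object (co C) p d1 d0 D2 D1 D0 s0 L d \<Psi>"
  using assms unfolding lax_descent_object_def co_simps hom1_co hom2_co
  apply (elim conjE, intro conjI ballI)
  apply (simp_all only: simp_thms)
  apply (rule cat_iso_by_op[where \<sigma>=id and \<tau>=id], erule bspec, assumption)
  apply (auto simp: bij_betw_id)
  done

lemma cokernel_diagram_co:
  assumes "cokernel_diagram C p P d0 d1 \<alpha> Q D0 D1 D2 s0"
  shows "cokernel_diagram (co C) p P d1 d0 \<alpha> Q D2 D1 D0 s0"
proof -
  have "opcomma C p P d0 d1 \<alpha>" "pushout2 C d0 d1 Q D2 D0"
    using assms unfolding cokernel_diagram_def by blast+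
  then show ?thesis
    using assms unfolding cokernel_diagram_def by (simp add: opcomma_co pushout2_co)
qed

lemma has_cokernel_diagram_co: "has_cokernel_diagram C p \<Longrightarrow> has_cokernel_diagram (co C) p"
  unfolding has_cokernel_diagram_def by (metis cokernel_diagram_co)

lemma invertible2_co: "invertible2 (co C) \<xi> \<longleftrightarrow> invertible2 C \<xi>"
  unfolding invertible2_def co_simps hom2_co by auto

lemma invertible2_inverse:
  assumes "\<xi> \<in> Ce C" "\<theta> \<in> hom2 C (cod2 C \<xi>) (dom2 C \<xi>)"
    "vc C \<theta> \<xi> = id2 C (dom2 C \<xi>)" "vc C \<xi> \<theta> = id2 C (cod2 C \<xi>)"
  shows "invertible2 C \<theta>"
  using assms unfolding invertible2_def by (auto simp: hom2_def)

lemma equivalence1_co: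
  assumes "equivalence1 C f"
  shows "equivalence1 (co C) f"
proof -
  obtain g \<eta> \<epsilon> where f: "f \<in> Ar C" "g \<in> hom1 C (trg1 C f) (src1 C f)"
    and \<eta>: "\<eta> \<in> hom2 C (ide1 C (src1 C f)) (cmp C g f)" "invertible2 C \<eta>"
    and \<epsilon>: "\<epsilon> \<in> hom2 C (cmp C f g) (ide1 C (trg1 C f))" "invertible2 C \<epsilon>"
    using assms unfolding equivalence1_def by blast
  obtain \<eta>' where "\<eta>' \<in> hom2 C (cod2 C \<eta>) (dom2 C \<eta>)"
    "vc C \<eta>' \<eta> = id2 C (dom2 C \<eta>)" "vc C \<eta> \<eta>' = id2 C (cod2 C \<eta>)"
    using \<eta>(2) unfolding invertible2_def by blast
  then have \<eta>': "\<eta>' \<in> hom2 C (cmp C g f) (ide1 C (src1 C f))" "invertible2 C \<eta>'"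
    using \<eta>(1) invertible2_inverse[of \<eta> C \<eta>'] by (simp_all add: hom2_def)
  obtain \<epsilon>' where "\<epsilon>' \<in> hom2 C (cod2 C \<epsilon>) (dom2 C \<epsilon>)"
    "vc C \<epsilon>' \<epsilon> = id2 C (dom2 C \<epsilon>)" "vc C \<epsilon> \<epsilon>' = id2 C (cod2 C \<epsilon>)"
    using \<epsilon>(2) unfolding invertible2_def by blast
  then have \<epsilon>': "\<epsilon>' \<in> hom2 C (ide1 C (trg1 C f)) (cmp C f g)" "invertible2 C \<epsilon>'"
    using \<epsilon>(1) invertible2_inverse[of \<epsilon> C \<epsilon>'] by (simp_all add: hom2_def)
  show ?thesis
    using \<eta>' \<epsilon>'
    unfolding equivalence1_def co_simps hom1_co hom2_co invertible2_co using f by blast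
qed

lemma adjunction_co: "adjunction (co C) l r \<eta> \<epsilon> \<longleftrightarrow> adjunction C r l \<epsilon> \<eta>"
  unfolding adjunction_def co_simps hom1_co hom2_co by (auto simp: hom1_def)

lemma has_left_adjoint_co: "has_left_adjoint (co C) p \<longleftrightarrow> has_right_adjoint C p"
  unfolding has_left_adjoint_def has_right_adjoint_def adjunction_co by blast

lemma effective_faithful_co:
  assumes "effective_faithful C p"
  shows "effective_faithful (co C) p"
proof -
  obtain P d0 d1 \<alpha> Q D0 D1 D2 s0 L d \<Psi> pH where
    cokernel: "cokernel_diagram C p P d0 d1 \<alpha> Q D0 D1 D2 s0"
    and descent: "lax_descent_object C p d0 d1 D0 D1 D2 s0 L d \<Psi>"
    and pH: "pH \<in> hom1 C (src1 C p) L" "cmp C d pH = p" "hc C \<Psi> (id2 C pH) = \<alpha>" "equivalence1 C pH"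
    using assms unfolding effective_faithful_def by blast
  show ?thesis
    unfolding effective_faithful_def co_simps hom1_co
    using cokernel_diagram_co[OF cokernel] lax_descent_object_co[OF descent] pH(1-3) equivalence1_co[OF pH(4)]
    by blast
qed

lemma effective_faithful_co_iff: "effective_faithful (co C) p \<longleftrightarrow> effective_faithful C p"
  using effective_faithful_co[of C p] effective_faithful_co[of "co C" p] by auto

theorem corollary5p11:
  fixes C :: "('o, 'a, 'c) twocat_data" and p :: 'a
  assumes "twocat C" and "p \<in> Ar C" and "has_cokernel_diagram C p"
  shows "(monadic C p \<longleftrightarrow> has_left_adjoint C p \<and> effective_faithful C p) \<and>
         (comonadic C p \<longleftrightarrow> has_right_adjoint C p \<and> effective_faithful C p)"
proof -
  interpret two_category C by (rule two_category.intro) (rule assms(1))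
  interpret co: two_category "co C" by (rule two_category.intro) (rule twocat_co)
  have "monadic C p \<longleftrightarrow> has_left_adjoint C p \<and> effective_faithful C p"
    using monadic_imp_left_adjoint_effective_faithful[OF assms(3)] left_adjoint_effective_faithful_imp_monadic
    by blast
  moreover have "monadic (co C) p \<longleftrightarrow> has_left_adjoint (co C) p \<and> effective_faithful (co C) p"
    using co.monadic_imp_left_adjoint_effective_faithful[OF has_cokernel_diagram_co[OF assms(3)]]
      co.left_adjoint_effective_faithful_imp_monadic
    by blast
  ultimately show ?thesis
    unfolding comonadic_def has_left_adjoint_co effective_faithful_co_iff by blast
qed

end
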